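(* Let $(S,\lambda_S^\bullet,\mu_S^{(0)})$, $(G,\lambda_G^\bullet,\mu_G^{(0)})$, $(T,\lambda_T^\bullet,\mu_T^{(0)})$ be Haar groupoids and $p:S\to G$, $q:T\to G$ homomorphisms of Haar groupoids, with weak pullback $P$. For $u=(s,g,t)\in P^{(0)}$ put $\lambda_P^{u}=\lambda_S^s\times\delta_g\times\lambda_T^t$. Then $\lambda_P^\bullet=\{\lambda_P^u\}_{u\in P^{(0)}}$ is a continuous left Haar system for $P$.
   Context: For a groupoid $G$: unit space $G^{(0)}$, range/source $r,d$, $G^u=r^{-1}(u)$. A system of measures on a Borel map $\pi:X\to Y$ is a family $\{\lambda^y\}_{y\in Y}$ of positive Borel measures on $X$ with $\lambda^y$ concentrated on $\pi^{-1}(y)$. A continuous left Haar system on a groupoid $G$ is a system of measures $\lambda^\bullet$ on $r:G\to G^{(0)}$ which is continuous ($u\mapsto\int f\,d\lambda^u$ continuous on $G^{(0)}$ for every continuous compactly supported $f\ge0$ on $G$), left invariant ($\lambda^{d(x)}(E)=\lambda^{r(x)}(x\cdot(E\cap G^{d(x)}))$ for all $x\in G$ and Borel $E\subseteq G$), and positive on open sets ($\lambda^u(A)>0$ for every open $A$ with $A\cap G^u\ne\emptyset$). Induced measure of a Radon $\mu^{(0)}$ on $G^{(0)}$: $\mu(E)=\int\lambda^u(E)\,d\mu^{(0)}(u)$; $\mu^{(0)}$ is quasi-invariant if $\mu\sim\mu^{-1}$, $\mu^{-1}(E)=\mu(E^{-1})$. A Haar groupoid $(G,\lambda^\bullet,\mu^{(0)})$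 is a second countable, locally compact, Hausdorff topological groupoid with a continuous left Haar system and a non-zero quasi-invariant Radon measure on $G^{(0)}$. A homomorphism of Haar groupoids is a continuous groupoid homomorphism $p$ with $p_*(\mu)\sim\nu$ for the induced measures. The weak pullback is $P=\{(s,g,t)\in S\times G\times T: r_G(g)=r_G(p(s)),\ d_G(g)=r_G(q(t))\}$ with subspace topology; composable pairs $((s,g,t),(\sigma,h,\tau))$ are those with $r_S(\sigma)=d_S(s)$, $r_T(\tau)=d_T(t)$, $h=p(s)^{-1}gq(t)$, product $(s\sigma,g,t\tau)$, inverse $(s^{-1},p(s)^{-1}gq(t),t^{-1})$, $r_P(s,g,t)=(r_S(s),g,r_T(t))$, $d_P(s,g,t)=(d_S(s),p(s)^{-1}gq(t),d_T(t))$, and $P^{(0)}=\{(s,g,t):s\in S^{(0)},t\in T^{(0)},r_G(g)=p(s),d_G(g)=q(t)\}$. The measure $\lambda_S^s\times\delta_g\times\lambda_T^t$ is a measure on $S\times G\times T$ ($\delta_g$ the Dirac mass), regarded as a measure on $P$. *)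

theory Defs
  imports "HOL-Analysis.Analysis" "HOL-Probability.Probability"
begin

definition borel_of :: "'a topology \<Rightarrow> 'a measure" where
  "borel_of X = sigma (topspace X) {U. openin X U}"

text \<open>A (topological) groupoid is given by its space of arrows (a topology whose
  topspace is the set of arrows), its unit space, range map, source map (called d),
  partial multiplication and inverse.\<close>

record 'a tgroupoid =
  gtop   :: "'a topology"
  gunits :: "'a set"
  gr     :: "'a \<Rightarrow> 'a"
  gd     :: "'a \<Rightarrow> 'a"
  gmul   :: "'a \<Rightarrow> 'a \<Rightarrow> 'a"
  ginv   :: "'a \<Rightarrow> 'a"

abbreviation garr :: "('a, 'b) tgroupoid_scheme \<Rightarrow> 'a set" where
  "garr G \<equiv> topspace (gtop G)"

definition composable :: "('a, 'b) tgroupoid_scheme \<Rightarrow> ('a \<times> 'a) set" where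
  "composable G = {(x, y). x \<in> garr G \<and> y \<in> garr G \<and> gd G x = gr G y}"

definition groupoid :: "('a, 'b) tgroupoid_scheme \<Rightarrow> bool" where
  "groupoid G \<longleftrightarrow>
     gunits G \<subseteq> garr G \<and>
     (\<forall>x\<in>garr G. gr G x \<in> gunits G \<and> gd G x \<in> gunits G) \<and>
     (\<forall>u\<in>gunits G. gr G u = u \<and> gd G u = u) \<and>
     (\<forall>(x, y)\<in>composable G. gmul G x y \<in> garr G \<and>
         gr G (gmul G x y) = gr G x \<and> gd G (gmul G x y) = gd G y) \<and>
     (\<forall>x\<in>garr G. \<forall>y\<in>garr G. \<forall>z\<in>garr G. gd G x = gr G y \<longrightarrow> gd G y = gr G z \<longrightarrow>
         gmul G (gmul G x y) z = gmul G x (gmul G y z)) \<and>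
     (\<forall>x\<in>garr G. gmul G (gr G x) x = x \<and> gmul G x (gd G x) = x) \<and>
     (\<forall>x\<in>garr G. ginv G x \<in> garr G \<and> gr G (ginv G x) = gd G x \<and> gd G (ginv G x) = gr G x \<and>
         gmul G x (ginv G x) = gr G x \<and> gmul G (ginv G x) x = gd G x)"

definition topological_groupoid :: "('a, 'b) tgroupoid_scheme \<Rightarrow> bool" where
  "topological_groupoid G \<longleftrightarrow> groupoid G \<and>
     continuous_map (gtop G) (gtop G) (gr G) \<and>
     continuous_map (gtop G) (gtop G) (gd G) \<and>
     continuous_map (gtop G) (gtop G) (ginv G) \<and>
     continuous_map (subtopology (prod_topology (gtop G) (gtop G)) (composable G)) (gtop G)
        (\<lambda>(x, y). gmul G x y)"

definition lcsc_groupoid :: "('a, 'b) tgroupoid_scheme \<Rightarrow> bool" where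
  "lcsc_groupoid G \<longleftrightarrow> topological_groupoid G \<and> second_countable (gtop G) \<and>
     locally_compact_space (gtop G) \<and> Hausdorff_space (gtop G)"

definition rfib :: "('a, 'b) tgroupoid_scheme \<Rightarrow> 'a \<Rightarrow> 'a set" where
  "rfib G u = {x \<in> garr G. gr G x = u}"

definition ltrans :: "('a, 'b) tgroupoid_scheme \<Rightarrow> 'a \<Rightarrow> 'a set \<Rightarrow> 'a set" where
  "ltrans G x A = (\<lambda>y. gmul G x y) ` A"

definition system_of_measures :: "('a, 'b) tgroupoid_scheme \<Rightarrow> ('a \<Rightarrow> 'a measure) \<Rightarrow> bool" where
  "system_of_measures G lam \<longleftrightarrow>
     (\<forall>u\<in>gunits G. sets (lam u) = sets (borel_of (gtop G)) \<and> space (lam u) = garr G \<and>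
        emeasure (lam u) (garr G - rfib G u) = 0)"

definition cc_nonneg :: "'a topology \<Rightarrow> ('a \<Rightarrow> real) \<Rightarrow> bool" where
  "cc_nonneg X f \<longleftrightarrow> continuous_map X euclidean f \<and> (\<forall>x\<in>topspace X. 0 \<le> f x) \<and>
     (\<exists>K. compactin X K \<and> (\<forall>x\<in>topspace X - K. f x = 0))"

definition continuous_system :: "('a, 'b) tgroupoid_scheme \<Rightarrow> ('a \<Rightarrow> 'a measure) \<Rightarrow> bool" where
  "continuous_system G lam \<longleftrightarrow>
     (\<forall>f. cc_nonneg (gtop G) f \<longrightarrow>
        (\<forall>u\<in>gunits G. (\<integral>\<^sup>+ x. ennreal (f x) \<partial>lam u) < \<infinity>) \<and>
        continuous_map (subtopology (gtop G) (gunits G)) euclidean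
           (\<lambda>u. enn2real (\<integral>\<^sup>+ x. ennreal (f x) \<partial>lam u)))"

definition left_invariant :: "('a, 'b) tgroupoid_scheme \<Rightarrow> ('a \<Rightarrow> 'a measure) \<Rightarrow> bool" where
  "left_invariant G lam \<longleftrightarrow>
     (\<forall>x\<in>garr G. \<forall>E\<in>sets (borel_of (gtop G)).
        emeasure (lam (gd G x)) E = emeasure (lam (gr G x)) (ltrans G x (E \<inter> rfib G (gd G x))))"

definition positive_on_open :: "('a, 'b) tgroupoid_scheme \<Rightarrow> ('a \<Rightarrow> 'a measure) \<Rightarrow> bool" where
  "positive_on_open G lam \<longleftrightarrow>
     (\<forall>u\<in>gunits G. \<forall>A. openin (gtop G) A \<and> A \<inter> rfib G u \<noteq> {} \<longrightarrow> emeasure (lam u) A > 0)"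

definition cont_left_haar_system :: "('a, 'b) tgroupoid_scheme \<Rightarrow> ('a \<Rightarrow> 'a measure) \<Rightarrow> bool" where
  "cont_left_haar_system G lam \<longleftrightarrow> system_of_measures G lam \<and> continuous_system G lam \<and>
     left_invariant G lam \<and> positive_on_open G lam"

text \<open>Radon measure on the unit space (a Borel measure finite on compact sets; in a
  second countable locally compact Hausdorff space these are exactly the Radon measures).\<close>
definition radon_on :: "'a topology \<Rightarrow> 'a measure \<Rightarrow> bool" where
  "radon_on X m \<longleftrightarrow> sets m = sets (borel_of X) \<and> space m = topspace X \<and>
     (\<forall>K. compactin X K \<longrightarrow> emeasure m K < \<infinity>)"

definition induced :: "('a \<Rightarrow> 'a measure) \<Rightarrow> 'a measure \<Rightarrow> 'a set \<Rightarrow> ennreal" where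
  "induced lam mu0 E = (\<integral>\<^sup>+ u. emeasure (lam u) E \<partial>mu0)"

definition ginvset :: "('a, 'b) tgroupoid_scheme \<Rightarrow> 'a set \<Rightarrow> 'a set" where
  "ginvset G E = ginv G ` E"

definition quasi_invariant :: "('a, 'b) tgroupoid_scheme \<Rightarrow> ('a \<Rightarrow> 'a measure) \<Rightarrow> 'a measure \<Rightarrow> bool" where
  "quasi_invariant G lam mu0 \<longleftrightarrow>
     (\<forall>E\<in>sets (borel_of (gtop G)).
        induced lam mu0 E = 0 \<longleftrightarrow> induced lam mu0 (ginvset G E) = 0)"

definition haar_groupoid :: "('a, 'b) tgroupoid_scheme \<Rightarrow> ('a \<Rightarrow> 'a measure) \<Rightarrow> 'a measure \<Rightarrow> bool" where
  "haar_groupoid G lam mu0 \<longleftrightarrow> lcsc_groupoid G \<and> cont_left_haar_system G lam \<and>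
     radon_on (subtopology (gtop G) (gunits G)) mu0 \<and> emeasure mu0 (gunits G) \<noteq> 0 \<and>
     quasi_invariant G lam mu0"

definition groupoid_hom :: "('a, 'b) tgroupoid_scheme \<Rightarrow> ('c, 'd) tgroupoid_scheme \<Rightarrow> ('a \<Rightarrow> 'c) \<Rightarrow> bool" where
  "groupoid_hom S G p \<longleftrightarrow> (\<forall>x\<in>garr S. p x \<in> garr G) \<and>
     (\<forall>(x, y)\<in>composable S. gmul G (p x) (p y) = p (gmul S x y) \<and> gd G (p x) = gr G (p y))"

definition haar_hom ::
  "('a, 'b) tgroupoid_scheme \<Rightarrow> ('a \<Rightarrow> 'a measure) \<Rightarrow> 'a measure \<Rightarrow>
   ('c, 'd) tgroupoid_scheme \<Rightarrow> ('c \<Rightarrow> 'c measure) \<Rightarrow> 'c measure \<Rightarrow> ('a \<Rightarrow> 'c) \<Rightarrow> bool" where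
  "haar_hom S lamS muS G lamG muG p \<longleftrightarrow>
     continuous_map (gtop S) (gtop G) p \<and> groupoid_hom S G p \<and>
     (\<forall>E\<in>sets (borel_of (gtop G)).
        induced lamS muS (p -` E \<inter> garr S) = 0 \<longleftrightarrow> induced lamG muG E = 0)"

definition wp_set ::
  "('s, 'x) tgroupoid_scheme \<Rightarrow> ('g, 'y) tgroupoid_scheme \<Rightarrow> ('t, 'z) tgroupoid_scheme \<Rightarrow>
   ('s \<Rightarrow> 'g) \<Rightarrow> ('t \<Rightarrow> 'g) \<Rightarrow> ('s \<times> 'g \<times> 't) set" where
  "wp_set S G T p q = {(s, g, t). s \<in> garr S \<and> g \<in> garr G \<and> t \<in> garr T \<and>
      gr G g = gr G (p s) \<and> gd G g = gr G (q t)}"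

definition weak_pullback ::
  "('s, 'x) tgroupoid_scheme \<Rightarrow> ('g, 'y) tgroupoid_scheme \<Rightarrow> ('t, 'z) tgroupoid_scheme \<Rightarrow>
   ('s \<Rightarrow> 'g) \<Rightarrow> ('t \<Rightarrow> 'g) \<Rightarrow> ('s \<times> 'g \<times> 't) tgroupoid" where
  "weak_pullback S G T p q =
    \<lparr> gtop = subtopology (prod_topology (gtop S) (prod_topology (gtop G) (gtop T))) (wp_set S G T p q),
      gunits = {(s, g, t). s \<in> gunits S \<and> t \<in> gunits T \<and> g \<in> garr G \<and> gr G g = p s \<and> gd G g = q t},
      gr = (\<lambda>(s, g, t). (gr S s, g, gr T t)),
      gd = (\<lambda>(s, g, t). (gd S s, gmul G (gmul G (ginv G (p s)) g) (q t), gd T t)),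
      gmul = (\<lambda>(s, g, t) (\<sigma>, h, \<tau>). (gmul S s \<sigma>, g, gmul T t \<tau>)),
      ginv = (\<lambda>(s, g, t). (ginv S s, gmul G (gmul G (ginv G (p s)) g) (q t), ginv T t)) \<rparr>"

text \<open>The system \<open>\<lambda>_P^{(s,g,t)} = \<lambda>_S^s \<times> \<delta>_g \<times> \<lambda>_T^t\<close>, a measure on
  \<open>S \<times> G \<times> T\<close> regarded as a (Borel) measure on \<open>P\<close>.\<close>
definition pullback_system ::
  "('s, 'x) tgroupoid_scheme \<Rightarrow> ('g, 'y) tgroupoid_scheme \<Rightarrow> ('t, 'z) tgroupoid_scheme \<Rightarrow>
   ('s \<Rightarrow> 'g) \<Rightarrow> ('t \<Rightarrow> 'g) \<Rightarrow> ('s \<Rightarrow> 's measure) \<Rightarrow> ('t \<Rightarrow> 't measure) \<Rightarrow>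
   ('s \<times> 'g \<times> 't) \<Rightarrow> ('s \<times> 'g \<times> 't) measure" where
  "pullback_system S G T p q lamS lamT =
     (\<lambda>(s, g, t). measure_of (wp_set S G T p q)
        (sets (borel_of (gtop (weak_pullback S G T p q))))
        (\<lambda>E. emeasure (lamS s \<Otimes>\<^sub>M (return (borel_of (gtop G)) g \<Otimes>\<^sub>M lamT t)) E))"

end

theory Submission
  imports Defs
begin

text \<open>The measure \<open>\<lambda>\<^sub>P\<^bsup>(s,g,t)\<^esub>\<close> lives on the fibre \<open>S\<^bsup>s\<^esub> \<times> {g} \<times> T\<^bsup>t\<^esub>\<close> of \<open>P\<close>, and by Fubini, integrals
  against it are iterated integrals over \<open>\<lambda>\<^sub>S\<^bsup>s\<^esub>\<close> and \<open>\<lambda>\<^sub>T\<^bsup>t\<^esub>\<close>. Positivity on open sets follows from that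
  of \<open>\<lambda>\<^sub>S\<close> and \<open>\<lambda>\<^sub>T\<close> on an open box inside the given open set. For continuity, a compactly supported
  function on the closed subspace \<open>P\<close> of \<open>S \<times> G \<times> T\<close> extends (Tietze) to a compactly supported function on
  \<open>S \<times> G \<times> T\<close>; integrating a jointly continuous compactly supported function against a continuous system
  of measures is jointly continuous in the unit and in the remaining variables, and this is applied once
  for \<open>T\<close> and once for \<open>S\<close>. For left invariance, left translation by \<open>(s, g, t)\<close> carries the fibre over
  \<open>d(s, g, t)\<close> onto the fibre over \<open>r(s, g, t)\<close> by translating with \<open>s\<close> and \<open>t\<close> in the outer components,
  so invariance of \<open>\<lambda>\<^sub>P\<close> reduces to that of \<open>\<lambda>\<^sub>T\<close> in the inner and of \<open>\<lambda>\<^sub>S\<close> in the outer integral.\<close>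

section \<open>Borel sets of an abstract topology\<close>

lemma space_borel_of [simp]: "space (borel_of X) = topspace X"
  unfolding borel_of_def by (simp add: space_measure_of_conv)

lemma sets_borel_of: "sets (borel_of X) = sigma_sets (topspace X) {U. openin X U}"
  unfolding borel_of_def by (rule sets_measure_of) (auto dest: openin_subset)

lemma borel_of_open: "openin X U \<Longrightarrow> U \<in> sets (borel_of X)"
  unfolding sets_borel_of by auto

lemma borel_of_closed:
  assumes "closedin X C"
  shows "C \<in> sets (borel_of X)"
proof -
  have "topspace X - (topspace X - C) \<in> sets (borel_of X)"
    using sets.compl_sets[OF borel_of_open, of X "topspace X - C"] assms by auto
  then show ?thesis
    using closedin_subset[OF assms] by (simp add: double_diff)
qed

lemma continuous_map_measurable_borel_of:
  assumes "continuous_map X Y f"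
  shows "f \<in> measurable (borel_of X) (borel_of Y)"
  unfolding borel_of_def
proof (rule measurable_measure_of)
  show "{U. openin Y U} \<subseteq> Pow (topspace Y)"
    by (auto dest: openin_subset)
  show "f \<in> space (sigma (topspace X) {U. openin X U}) \<rightarrow> topspace Y"
    using assms by (auto simp: space_measure_of_conv continuous_map_def)
next
  fix V assume "V \<in> {U. openin Y U}"
  then have "openin X (f -` V \<inter> topspace X)"
    using assms by (auto simp: continuous_map_def vimage_def Int_def conj_commute)
  then show "f -` V \<inter> space (sigma (topspace X) {U. openin X U}) \<in> sets (sigma (topspace X) {U. openin X U})"
    using borel_of_open[unfolded borel_of_def] by (simp add: space_measure_of_conv)
qed

lemma borel_measurable_continuous_map:
  assumes "continuous_map X euclideanreal f"
  shows "f \<in> borel_measurable (borel_of X)"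
  using continuous_map_measurable_borel_of[OF assms] by (simp add: borel_of_def borel_def)

lemma sets_borel_of_subtopology_subset:
  assumes "A \<in> sets (borel_of X)"
  shows "sets (borel_of (subtopology X A)) \<subseteq> sets (borel_of X)"
proof -
  have AX: "A \<subseteq> topspace X"
    using sets.sets_into_space[OF assms] by simp
  have "E \<in> sets (borel_of X)" if "E \<in> sigma_sets (topspace X \<inter> A) {U. openin (subtopology X A) U}" for E
    using that
  proof induct
    case (Basic a)
    then obtain U where "openin X U" "a = U \<inter> A"
      by (auto simp: openin_subtopology)
    then show ?case
      using assms borel_of_open by blast
  next
    case (Compl a)
    have "topspace X \<inter> A - a = A - a"
      using AX by auto
    then show ?case
      using Compl assms by auto
  qed auto
  then show ?thesis
    by (auto simp: sets_borel_of)
qed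

lemma openin_prod_topology_eq_Union_rectangles:
  assumes BX: "\<forall>U x. openin X U \<and> x \<in> U \<longrightarrow> (\<exists>V\<in>BX. x \<in> V \<and> V \<subseteq> U)"
    and BY: "\<forall>U y. openin Y U \<and> y \<in> U \<longrightarrow> (\<exists>V\<in>BY. y \<in> V \<and> V \<subseteq> U)"
    and W: "openin (prod_topology X Y) W"
  shows "W = \<Union>{A \<times> B |A B. A \<in> BX \<and> B \<in> BY \<and> A \<times> B \<subseteq> W}"
proof (intro subset_antisym subsetI)
  fix z assume "z \<in> W"
  obtain a b where z: "z = (a, b)"
    by fastforce
  have "\<exists>U V. openin X U \<and> openin Y V \<and> a \<in> U \<and> b \<in> V \<and> U \<times> V \<subseteq> W"
    using W \<open>z \<in> W\<close> z unfolding openin_prod_topology_alt by simp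
  then obtain U V where UV: "openin X U" "openin Y V" "a \<in> U" "b \<in> V" "U \<times> V \<subseteq> W"
    by blast
  obtain A where A: "A \<in> BX" "a \<in> A" "A \<subseteq> U"
    using BX UV(1,3) by blast
  obtain B where B: "B \<in> BY" "b \<in> B" "B \<subseteq> V"
    using BY UV(2,4) by blast
  have "A \<times> B \<subseteq> W"
    using A(3) B(3) UV(5) by blast
  then have "A \<times> B \<in> {A \<times> B |A B. A \<in> BX \<and> B \<in> BY \<and> A \<times> B \<subseteq> W}"
    using A(1) B(1) by blast
  moreover have "z \<in> A \<times> B"
    using A(2) B(2) z by simp
  ultimately show "z \<in> \<Union>{A \<times> B |A B. A \<in> BX \<and> B \<in> BY \<and> A \<times> B \<subseteq> W}"
    by (rule UnionI)
qed auto

lemma openin_prod_topology_box3: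
  assumes N: "openin (prod_topology X (prod_topology Y Z)) N" and abc: "(a, b, c) \<in> N"
  obtains U V W where "openin X U" "openin Y V" "openin Z W" "a \<in> U" "b \<in> V" "c \<in> W"
    "U \<times> V \<times> W \<subseteq> N"
proof -
  have "\<exists>U V'. openin X U \<and> openin (prod_topology Y Z) V' \<and> a \<in> U \<and> (b, c) \<in> V' \<and> U \<times> V' \<subseteq> N"
    using N abc unfolding openin_prod_topology_alt by simp
  then obtain U V' where UV': "openin X U" "openin (prod_topology Y Z) V'" "a \<in> U" "(b, c) \<in> V'"
      "U \<times> V' \<subseteq> N"
    by (elim exE conjE)
  then have "\<exists>V W. openin Y V \<and> openin Z W \<and> b \<in> V \<and> c \<in> W \<and> V \<times> W \<subseteq> V'"
    unfolding openin_prod_topology_alt by simp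
  then obtain V W where "openin Y V" "openin Z W" "b \<in> V" "c \<in> W" "V \<times> W \<subseteq> V'"
    by (elim exE conjE)
  moreover have "U \<times> V \<times> W \<subseteq> N"
    using UV'(5) calculation(5) by blast
  ultimately show ?thesis
    using that UV'(1,3) by blast
qed

lemma second_countable_prod_topology:
  assumes "second_countable X" "second_countable Y"
  shows "second_countable (prod_topology X Y)"
proof -
  obtain BX where BX: "countable BX" "\<forall>V\<in>BX. openin X V"
    "\<forall>U x. openin X U \<and> x \<in> U \<longrightarrow> (\<exists>V\<in>BX. x \<in> V \<and> V \<subseteq> U)"
    using assms(1) unfolding second_countable_def by blast
  obtain BY where BY: "countable BY" "\<forall>V\<in>BY. openin Y V"
    "\<forall>U y. openin Y U \<and> y \<in> U \<longrightarrow> (\<exists>V\<in>BY. y \<in> V \<and> V \<subseteq> U)"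
    using assms(2) unfolding second_countable_def by blast
  define B where "B = (\<lambda>(A, B). A \<times> B) ` (BX \<times> BY)"
  have "countable B"
    unfolding B_def using BX(1) BY(1) by simp
  moreover have "\<forall>V\<in>B. openin (prod_topology X Y) V"
    using BX(2) BY(2) by (auto simp: B_def openin_prod_Times_iff)
  moreover have "\<exists>V\<in>B. z \<in> V \<and> V \<subseteq> W" if "openin (prod_topology X Y) W" "z \<in> W" for W z
  proof -
    have "z \<in> \<Union>{A \<times> C |A C. A \<in> BX \<and> C \<in> BY \<and> A \<times> C \<subseteq> W}"
      using openin_prod_topology_eq_Union_rectangles[OF BX(3) BY(3) that(1)] that(2) by simp
    then obtain A C where "A \<in> BX" "C \<in> BY" "A \<times> C \<subseteq> W" "z \<in> A \<times> C"
      by auto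
    then show ?thesis
      unfolding B_def by force
  qed
  ultimately show ?thesis
    unfolding second_countable_def by (intro exI[of _ B]) blast
qed

lemma sets_borel_of_prod_topology_subset:
  assumes "second_countable X" "second_countable Y"
    and "space M = topspace X" "space N = topspace Y"
    and "sets (borel_of X) \<subseteq> sets M" "sets (borel_of Y) \<subseteq> sets N"
  shows "sets (borel_of (prod_topology X Y)) \<subseteq> sets (M \<Otimes>\<^sub>M N)"
proof -
  obtain BX where BX: "countable BX" "\<forall>V\<in>BX. openin X V"
    "\<forall>U x. openin X U \<and> x \<in> U \<longrightarrow> (\<exists>V\<in>BX. x \<in> V \<and> V \<subseteq> U)"
    using assms(1) unfolding second_countable_def by blast
  obtain BY where BY: "countable BY" "\<forall>V\<in>BY. openin Y V"
    "\<forall>U y. openin Y U \<and> y \<in> U \<longrightarrow> (\<exists>V\<in>BY. y \<in> V \<and> V \<subseteq> U)"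
    using assms(2) unfolding second_countable_def by blast
  have "W \<in> sets (M \<Otimes>\<^sub>M N)" if W: "openin (prod_topology X Y) W" for W
  proof -
    define R where "R = {A \<times> C |A C. A \<in> BX \<and> C \<in> BY \<and> A \<times> C \<subseteq> W}"
    have "R \<subseteq> (\<lambda>(A, C). A \<times> C) ` (BX \<times> BY)"
      unfolding R_def by auto
    then have "countable R"
      by (rule countable_subset) (use BX(1) BY(1) in simp)
    moreover have "R \<subseteq> sets (M \<Otimes>\<^sub>M N)"
    proof
      fix D assume "D \<in> R"
      then obtain A C where "D = A \<times> C" "openin X A" "openin Y C"
        unfolding R_def using BX(2) BY(2) by auto
      then have "A \<in> sets M" "C \<in> sets N"
        using assms(5,6) borel_of_open by blast+
      then show "D \<in> sets (M \<Otimes>\<^sub>M N)"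
        using \<open>D = A \<times> C\<close> by simp
    qed
    ultimately have "\<Union>R \<in> sets (M \<Otimes>\<^sub>M N)"
      by (intro sets.countable_Union)
    then show ?thesis
      using openin_prod_topology_eq_Union_rectangles[OF BX(3) BY(3) W] by (simp add: R_def)
  qed
  then have "sigma_sets (space (M \<Otimes>\<^sub>M N)) {U. openin (prod_topology X Y) U} \<subseteq> sets (M \<Otimes>\<^sub>M N)"
    by (intro sets.sigma_sets_subset) auto
  then show ?thesis
    by (simp add: sets_borel_of space_pair_measure assms(3,4))
qed

section \<open>Compactly supported functions\<close>

lemma continuous_map_real_iff:
  "continuous_map X euclideanreal f \<longleftrightarrow>
     (\<forall>x\<in>topspace X. \<forall>e>0. \<exists>U. openin X U \<and> x \<in> U \<and> (\<forall>y\<in>U. \<bar>f y - f x\<bar> < e))"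
  using Met_TC.continuous_map_to_metric[of X f] by (simp add: dist_real_def abs_minus_commute)

lemma continuous_map_real_nbhd:
  assumes "continuous_map X euclideanreal f" "x \<in> topspace X" "e > 0"
  obtains U where "openin X U" "x \<in> U" "\<And>y. y \<in> U \<Longrightarrow> \<bar>f y - f x\<bar> < e"
proof -
  have "\<forall>e>0. \<exists>U. openin X U \<and> x \<in> U \<and> (\<forall>y\<in>U. \<bar>f y - f x\<bar> < e)"
    using assms(1,2) unfolding continuous_map_real_iff by (rule bspec)
  then show ?thesis
    using that assms(3) by meson
qed

lemma continuous_map_uniform_on_compact_slice:
  assumes F: "continuous_map (prod_topology X Y) euclideanreal F" and K: "compactin X K"
    and y0: "y0 \<in> topspace Y" and e: "e > 0"
  obtains V where "openin Y V" "y0 \<in> V" "\<And>x y. x \<in> K \<Longrightarrow> y \<in> V \<Longrightarrow> \<bar>F (x, y) - F (x, y0)\<bar> < e"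
proof -
  define D where "D z = F z - F (fst z, y0)" for z
  have "continuous_map (prod_topology X Y) (prod_topology X Y) (\<lambda>z. (fst z, y0))"
    using y0 by (simp add: continuous_map_paired continuous_map_fst)
  from continuous_map_compose[OF this F]
  have "continuous_map (prod_topology X Y) euclideanreal (\<lambda>z. F (fst z, y0))"
    by (simp add: o_def)
  then have "continuous_map (prod_topology X Y) euclideanreal D"
    unfolding D_def using F by (intro continuous_map_diff)
  then have "openin (prod_topology X Y) {z \<in> topspace (prod_topology X Y). D z \<in> {-e<..<e}}"
    by (rule openin_continuous_map_preimage) simp
  moreover have "K \<times> {y0} \<subseteq> {z \<in> topspace (prod_topology X Y). D z \<in> {-e<..<e}}"
    using compactin_subset_topspace[OF K] y0 e by (auto simp: D_def)
  ultimately have "\<exists>U V. openin X U \<and> openin Y V \<and> K \<subseteq> U \<and> y0 \<in> V \<and>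
      U \<times> V \<subseteq> {z \<in> topspace (prod_topology X Y). D z \<in> {-e<..<e}}"
    by (rule tube_lemma_left[OF _ K y0])
  then obtain U V where UV: "openin Y V" "y0 \<in> V" "K \<subseteq> U"
      "U \<times> V \<subseteq> {z \<in> topspace (prod_topology X Y). D z \<in> {-e<..<e}}"
    by blast
  show ?thesis
  proof (rule that[OF UV(1,2)])
    fix x y assume "x \<in> K" "y \<in> V"
    then have "(x, y) \<in> U \<times> V"
      using UV(3) by blast
    then have "D (x, y) \<in> {-e<..<e}"
      using UV(4) by blast
    then show "\<bar>F (x, y) - F (x, y0)\<bar> < e"
      by (simp add: D_def abs_less_iff)
  qed
qed

lemma cc_nonneg_Urysohn:
  assumes lc: "locally_compact_space X" and H: "Hausdorff_space X" and K: "compactin X K"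
  obtains \<phi> where "cc_nonneg X \<phi>" "\<And>x. x \<in> K \<Longrightarrow> \<phi> x = 1"
proof -
  have "\<exists>V L. openin X V \<and> compactin X L \<and> closedin X L \<and> K \<subseteq> V \<and> V \<subseteq> L"
    using iffD1[OF locally_compact_space_compact_closed_compact lc] H K by blast
  then obtain V L where VL: "openin X V" "compactin X L" "K \<subseteq> V" "V \<subseteq> L"
    by blast
  have "completely_regular_space X"
    using locally_compact_regular_imp_completely_regular_space lc H by blast
  moreover have "closedin X (topspace X - V)" "disjnt K (topspace X - V)"
    using VL(1,3) by (auto simp: disjnt_def)
  ultimately obtain f where f: "continuous_map X (subtopology euclidean {0..1::real}) f"
      "f ` (topspace X - V) \<subseteq> {0}" "f ` K \<subseteq> {1}"
    using Urysohn_completely_regular_compact_closed[OF _ _ K, of 0 1] by auto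
  have fc: "continuous_map X euclideanreal f"
    using f(1) by (rule continuous_map_into_fulltopology)
  have f_nonneg: "0 \<le> f x" if "x \<in> topspace X" for x
    using f(1) that unfolding continuous_map_in_subtopology by auto
  have f0: "f x = 0" if "x \<in> topspace X - L" for x
    using f(2) that VL(4) by blast
  show ?thesis
  proof (rule that)
    show "cc_nonneg X f"
      unfolding cc_nonneg_def using fc f_nonneg f0 VL(2) by blast
    show "f x = 1" if "x \<in> K" for x
      using f(3) that by blast
  qed
qed

lemma cc_nonneg_extend:
  assumes lc: "locally_compact_space Z" and H: "Hausdorff_space Z" and C: "closedin Z C"
    and f: "cc_nonneg (subtopology Z C) f"
  obtains h where "cc_nonneg Z h" "\<And>z. z \<in> C \<Longrightarrow> h z = f z"
proof -
  have CZ: "C \<subseteq> topspace Z"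
    using C closedin_subset by blast
  have tC: "topspace (subtopology Z C) = C"
    using CZ by (rule topspace_subtopology_subset)
  have fc: "continuous_map (subtopology Z C) euclideanreal f" and fnn: "\<And>z. z \<in> C \<Longrightarrow> 0 \<le> f z"
    using f tC unfolding cc_nonneg_def by auto
  obtain K where K0: "compactin (subtopology Z C) K" "\<And>z. z \<in> C - K \<Longrightarrow> f z = 0"
    using f tC unfolding cc_nonneg_def by auto
  have K: "compactin Z K" "\<And>z. z \<in> C - K \<Longrightarrow> f z = 0"
    using K0 by (auto simp: compactin_subtopology)
  obtain \<phi> where \<phi>: "cc_nonneg Z \<phi>" "\<And>x. x \<in> K \<Longrightarrow> \<phi> x = 1"
    using cc_nonneg_Urysohn[OF lc H K(1)] by blast
  then obtain L where L: "compactin Z L" "\<And>z. z \<in> topspace Z - L \<Longrightarrow> \<phi> z = 0"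
    unfolding cc_nonneg_def by blast
  define C0 where "C0 = C \<inter> L"
  have "compactin Z C0"
    unfolding C0_def using C L(1) by (rule closed_Int_compactin)
  moreover have "continuous_map (subtopology Z C0) euclideanreal f"
    using continuous_map_from_subtopology[OF fc, of C0]
    by (simp add: subtopology_subtopology C0_def Int_absorb1 inf_assoc)
  moreover have "completely_regular_space Z"
    using locally_compact_regular_imp_completely_regular_space lc H by blast
  moreover have "f ` C0 \<subseteq> {0..}"
    using fnn unfolding C0_def by auto
  ultimately obtain g where g: "continuous_map Z euclideanreal g" "g ` topspace Z \<subseteq> {0..}"
      "\<And>x. x \<in> C0 \<Longrightarrow> g x = f x"
    using Tietze_extension_completely_regular[of Z C0 "{0..}" f] by auto
  \<comment> \<open>\<open>g\<close> agrees with \<open>f\<close> only on \<open>C \<inter> L\<close>, but \<open>\<phi>\<close> vanishes off \<open>L\<close> and \<open>f\<close> vanishes off \<open>K\<close>, where \<open>\<phi> = 1\<close>\<close>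
  have "g z * \<phi> z = f z" if z: "z \<in> C" for z
  proof (cases "z \<in> L")
    case True
    then have "g z = f z"
      using g(3) z unfolding C0_def by blast
    then show ?thesis
      using \<phi>(2) K(2) z by (cases "z \<in> K") auto
  next
    case False
    then have "\<phi> z = 0"
      using L(2) z CZ by blast
    moreover have "z \<notin> K"
      using \<phi>(2) calculation by fastforce
    ultimately show ?thesis
      using K(2) z by simp
  qed
  moreover have "cc_nonneg Z (\<lambda>z. g z * \<phi> z)"
  proof -
    have "continuous_map Z euclideanreal \<phi>" "\<And>z. z \<in> topspace Z \<Longrightarrow> 0 \<le> \<phi> z"
      using \<phi>(1) unfolding cc_nonneg_def by blast+
    then have "continuous_map Z euclideanreal (\<lambda>z. g z * \<phi> z)" "\<And>z. z \<in> topspace Z \<Longrightarrow> 0 \<le> g z * \<phi> z"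
      using continuous_map_real_mult[OF g(1)] g(2) by auto
    moreover have "\<And>z. z \<in> topspace Z - L \<Longrightarrow> g z * \<phi> z = 0"
      using L(2) by simp
    ultimately show ?thesis
      unfolding cc_nonneg_def using L(1) by blast
  qed
  ultimately show ?thesis
    using that by blast
qed

lemma emeasure_compactin_finite:
  assumes lc: "locally_compact_space X" and H: "Hausdorff_space X"
    and sp: "sets M = sets (borel_of X)" "space M = topspace X"
    and fin: "\<And>f. cc_nonneg X f \<Longrightarrow> (\<integral>\<^sup>+ x. ennreal (f x) \<partial>M) < \<infinity>"
    and K: "compactin X K"
  shows "emeasure M K < \<infinity>"
proof -
  obtain \<phi> where \<phi>: "cc_nonneg X \<phi>" "\<And>x. x \<in> K \<Longrightarrow> \<phi> x = 1"
    using cc_nonneg_Urysohn[OF lc H K] by blast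
  have "K \<in> sets M"
    using sp(1) borel_of_closed compactin_imp_closedin[OF H K] by blast
  then have "emeasure M K = (\<integral>\<^sup>+ x. indicator K x \<partial>M)"
    by simp
  also have "\<dots> \<le> (\<integral>\<^sup>+ x. ennreal (\<phi> x) \<partial>M)"
    using \<phi> sp(2) by (intro nn_integral_mono) (auto simp: indicator_def cc_nonneg_def)
  also have "\<dots> < \<infinity>"
    by (rule fin[OF \<phi>(1)])
  finally show ?thesis .
qed

lemma sigma_finite_measure_locally_compact:
  assumes lc: "locally_compact_space X" and H: "Hausdorff_space X" and sc: "second_countable X"
    and sp: "sets M = sets (borel_of X)" "space M = topspace X"
    and fin: "\<And>f. cc_nonneg X f \<Longrightarrow> (\<integral>\<^sup>+ x. ennreal (f x) \<partial>M) < \<infinity>"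
  shows "sigma_finite_measure M"
proof
  obtain B where B: "countable B" "\<forall>V\<in>B. openin X V"
    "\<forall>U x. openin X U \<and> x \<in> U \<longrightarrow> (\<exists>V\<in>B. x \<in> V \<and> V \<subseteq> U)"
    using sc unfolding second_countable_def by blast
  define A where "A = {V \<in> B. emeasure M V \<noteq> \<infinity>}"
  have "space M \<subseteq> \<Union>A"
  proof
    fix x assume "x \<in> space M"
    then have "\<exists>U C. openin X U \<and> compactin X C \<and> x \<in> U \<and> U \<subseteq> C"
      using lc sp(2) unfolding locally_compact_space_def by simp
    then obtain U C where UC: "openin X U" "compactin X C" "x \<in> U" "U \<subseteq> C"
      by blast
    obtain V where V: "V \<in> B" "x \<in> V" "V \<subseteq> U"
      using B(3) UC(1,3) by blast
    have "emeasure M V \<le> emeasure M C"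
      using V(3) UC(4) sp(1) borel_of_closed compactin_imp_closedin[OF H UC(2)]
      by (intro emeasure_mono) auto
    also have "\<dots> < \<infinity>"
      by (rule emeasure_compactin_finite[OF lc H sp fin UC(2)])
    finally show "x \<in> \<Union>A"
      using V unfolding A_def by auto
  qed
  moreover have "\<Union>A \<subseteq> space M"
    using B(2) sp(2) openin_subset unfolding A_def by blast
  moreover have "A \<subseteq> sets M"
    using B(2) sp(1) borel_of_open unfolding A_def by blast
  moreover have "countable A" "\<forall>a\<in>A. emeasure M a \<noteq> \<infinity>"
    using B(1) unfolding A_def by simp_all
  ultimately show "\<exists>A. countable A \<and> A \<subseteq> sets M \<and> \<Union>A = space M \<and> (\<forall>a\<in>A. emeasure M a \<noteq> \<infinity>)"
    by (intro exI[of _ A]) blast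
qed

section \<open>Integrals of compactly supported functions depending on a parameter\<close>

locale cc_continuous_family =
  fixes X :: "'a topology" and U :: "'a set" and lam :: "'a \<Rightarrow> 'a measure"
  assumes locally_compact: "locally_compact_space X"
    and Hausdorff: "Hausdorff_space X"
    and second_countable: "second_countable X"
    and subset_topspace: "U \<subseteq> topspace X"
    and sets_lam: "\<And>u. u \<in> U \<Longrightarrow> sets (lam u) = sets (borel_of X)"
    and space_lam: "\<And>u. u \<in> U \<Longrightarrow> space (lam u) = topspace X"
    and nn_integral_cc_finite:
      "\<And>f u. cc_nonneg X f \<Longrightarrow> u \<in> U \<Longrightarrow> (\<integral>\<^sup>+ x. ennreal (f x) \<partial>lam u) < \<infinity>"
    and continuous_map_nn_integral_cc:
      "\<And>f. cc_nonneg X f \<Longrightarrow>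
         continuous_map (subtopology X U) euclideanreal (\<lambda>u. enn2real (\<integral>\<^sup>+ x. ennreal (f x) \<partial>lam u))"
begin

lemma sigma_finite_lam: "u \<in> U \<Longrightarrow> sigma_finite_measure (lam u)"
  by (rule sigma_finite_measure_locally_compact[OF locally_compact Hausdorff second_countable
        sets_lam space_lam nn_integral_cc_finite])

lemma measurable_lam_eq: "u \<in> U \<Longrightarrow> measurable (lam u) N = measurable (borel_of X) N"
  by (rule measurable_cong_sets[OF sets_lam refl])

context
  fixes Y :: "'b topology" and F :: "'a \<times> 'b \<Rightarrow> real" and K :: "'a set"
  assumes F_continuous: "continuous_map (prod_topology X Y) euclideanreal F"
    and F_nonneg: "\<And>x y. x \<in> topspace X \<Longrightarrow> y \<in> topspace Y \<Longrightarrow> 0 \<le> F (x, y)"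
    and K_compact: "compactin X K"
    and F_support: "\<And>x y. x \<in> topspace X - K \<Longrightarrow> y \<in> topspace Y \<Longrightarrow> F (x, y) = 0"
begin

lemma cc_nonneg_slice:
  assumes y: "y \<in> topspace Y"
  shows "cc_nonneg X (\<lambda>x. F (x, y))"
proof -
  have "continuous_map X (prod_topology X Y) (\<lambda>x. (x, y))"
    using y by (simp add: continuous_map_paired)
  from continuous_map_compose[OF this F_continuous]
  have "continuous_map X euclideanreal (\<lambda>x. F (x, y))"
    by (simp add: o_def)
  then show ?thesis
    unfolding cc_nonneg_def using F_nonneg[OF _ y] F_support[OF _ y] K_compact by blast
qed

lemma nn_integral_param_finite:
  "u \<in> U \<Longrightarrow> y \<in> topspace Y \<Longrightarrow> (\<integral>\<^sup>+ x. ennreal (F (x, y)) \<partial>lam u) < \<infinity>"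
  by (rule nn_integral_cc_finite[OF cc_nonneg_slice])

lemma enn2real_nn_integral_param_le:
  assumes u: "u \<in> U" and y: "y \<in> topspace Y" and y': "y' \<in> topspace Y" and eps: "\<epsilon> > 0"
    and close: "\<And>x. x \<in> K \<Longrightarrow> \<bar>F (x, y) - F (x, y')\<bar> < \<epsilon>"
    and \<phi>: "cc_nonneg X \<phi>" "\<And>x. x \<in> K \<Longrightarrow> \<phi> x = 1"
  shows "enn2real (\<integral>\<^sup>+ x. ennreal (F (x, y)) \<partial>lam u)
    \<le> enn2real (\<integral>\<^sup>+ x. ennreal (F (x, y')) \<partial>lam u) + \<epsilon> * enn2real (\<integral>\<^sup>+ x. ennreal (\<phi> x) \<partial>lam u)"
proof -
  have \<phi>_nonneg: "\<And>x. x \<in> topspace X \<Longrightarrow> 0 \<le> \<phi> x"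
    using \<phi>(1) by (simp add: cc_nonneg_def)
  have "(\<integral>\<^sup>+ x. ennreal (F (x, y)) \<partial>lam u) \<le> (\<integral>\<^sup>+ x. ennreal (F (x, y')) + ennreal \<epsilon> * ennreal (\<phi> x) \<partial>lam u)"
  proof (rule nn_integral_mono)
    fix x assume "x \<in> space (lam u)"
    then have x: "x \<in> topspace X"
      using space_lam[OF u] by simp
    have "F (x, y) \<le> F (x, y') + \<epsilon> * \<phi> x"
    proof (cases "x \<in> K")
      case True
      then show ?thesis
        using close[OF True] \<phi>(2)[OF True] by (simp add: abs_less_iff)
    next
      case False
      then show ?thesis
        using F_support[OF _ y] F_support[OF _ y'] x \<phi>_nonneg[OF x] eps by simp
    qed
    then have "ennreal (F (x, y)) \<le> ennreal (F (x, y') + \<epsilon> * \<phi> x)"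
      by (rule ennreal_leI)
    also have "\<dots> = ennreal (F (x, y')) + ennreal \<epsilon> * ennreal (\<phi> x)"
      using F_nonneg[OF x y'] \<phi>_nonneg[OF x] eps by (simp add: ennreal_plus ennreal_mult)
    finally show "ennreal (F (x, y)) \<le> ennreal (F (x, y')) + ennreal \<epsilon> * ennreal (\<phi> x)" .
  qed
  also have "\<dots> = (\<integral>\<^sup>+ x. ennreal (F (x, y')) \<partial>lam u) + ennreal \<epsilon> * (\<integral>\<^sup>+ x. ennreal (\<phi> x) \<partial>lam u)"
    using borel_measurable_continuous_map[OF \<phi>(1)[unfolded cc_nonneg_def, THEN conjunct1]]
      borel_measurable_continuous_map[OF cc_nonneg_slice[OF y', unfolded cc_nonneg_def, THEN conjunct1]]
    by (simp add: measurable_lam_eq[OF u] nn_integral_add nn_integral_cmult)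
  also have "\<dots> = ennreal (enn2real (\<integral>\<^sup>+ x. ennreal (F (x, y')) \<partial>lam u) + \<epsilon> * enn2real (\<integral>\<^sup>+ x. ennreal (\<phi> x) \<partial>lam u))"
    using nn_integral_param_finite[OF u y'] nn_integral_cc_finite[OF \<phi>(1) u] eps
    by (simp add: ennreal_plus ennreal_mult ennreal_enn2real less_top[symmetric])
  finally show ?thesis
    using eps by (intro enn2real_leI) simp_all
qed

lemma nn_integral_param_nbhd:
  assumes u0: "u0 \<in> topspace (subtopology X U)" and y0: "y0 \<in> topspace Y" and e: "e > 0"
  obtains N where "openin (prod_topology (subtopology X U) Y) N" "(u0, y0) \<in> N"
    "\<And>u y. (u, y) \<in> N \<Longrightarrow> \<bar>enn2real (\<integral>\<^sup>+ x. ennreal (F (x, y)) \<partial>lam u) -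
        enn2real (\<integral>\<^sup>+ x. ennreal (F (x, y0)) \<partial>lam u0)\<bar> < e"
proof -
  define I where "I u y = enn2real (\<integral>\<^sup>+ x. ennreal (F (x, y)) \<partial>lam u)" for u y
  obtain \<phi> where \<phi>: "cc_nonneg X \<phi>" "\<And>x. x \<in> K \<Longrightarrow> \<phi> x = 1"
    using cc_nonneg_Urysohn[OF locally_compact Hausdorff K_compact] by blast
  define \<Phi> where "\<Phi> u = enn2real (\<integral>\<^sup>+ x. ennreal (\<phi> x) \<partial>lam u)" for u
  obtain N1 where N1: "openin (subtopology X U) N1" "u0 \<in> N1" "\<And>u. u \<in> N1 \<Longrightarrow> \<bar>\<Phi> u - \<Phi> u0\<bar> < 1"
    unfolding \<Phi>_def
    by (rule continuous_map_real_nbhd[OF continuous_map_nn_integral_cc[OF \<phi>(1)] u0 zero_less_one]) blast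
  obtain N2 where N2: "openin (subtopology X U) N2" "u0 \<in> N2" "\<And>u. u \<in> N2 \<Longrightarrow> \<bar>I u y0 - I u0 y0\<bar> < e/2"
    unfolding I_def
    by (rule continuous_map_real_nbhd[OF continuous_map_nn_integral_cc[OF cc_nonneg_slice[OF y0]] u0
        half_gt_zero[OF e]]) blast
  \<comment> \<open>on \<open>N1\<close> we have \<open>\<Phi> u < \<Phi> u0 + 1\<close>, so this \<open>\<epsilon>\<close> keeps the error term \<open>\<epsilon> * \<Phi> u\<close> below \<open>e / 2\<close>\<close>
  define \<epsilon> where "\<epsilon> = e / (2 * (\<Phi> u0 + 1))"
  have "0 \<le> \<Phi> u0"
    by (simp add: \<Phi>_def)
  then have eps: "\<epsilon> > 0" "\<epsilon> * (\<Phi> u0 + 1) = e / 2"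
    unfolding \<epsilon>_def using e by (simp_all add: field_simps)
  obtain V where V: "openin Y V" "y0 \<in> V" "\<And>x y. x \<in> K \<Longrightarrow> y \<in> V \<Longrightarrow> \<bar>F (x, y) - F (x, y0)\<bar> < \<epsilon>"
    by (rule continuous_map_uniform_on_compact_slice[OF F_continuous K_compact y0 eps(1)]) blast
  show ?thesis
  proof (rule that[of "(N1 \<inter> N2) \<times> V"])
    show "openin (prod_topology (subtopology X U) Y) ((N1 \<inter> N2) \<times> V)"
      using N1(1) N2(1) V(1) by (simp add: openin_prod_Times_iff openin_Int)
    show "(u0, y0) \<in> (N1 \<inter> N2) \<times> V"
      using N1(2) N2(2) V(2) by blast
    fix u y assume "(u, y) \<in> (N1 \<inter> N2) \<times> V"
    then have uN: "u \<in> N1" "u \<in> N2" and yV: "y \<in> V"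
      by auto
    have u: "u \<in> U" and y: "y \<in> topspace Y"
      using uN(1) yV openin_subset[OF N1(1)] openin_subset[OF V(1)] by auto
    have close: "\<And>x. x \<in> K \<Longrightarrow> \<bar>F (x, y) - F (x, y0)\<bar> < \<epsilon>"
      using V(3) yV by blast
    then have close': "\<And>x. x \<in> K \<Longrightarrow> \<bar>F (x, y0) - F (x, y)\<bar> < \<epsilon>"
      by (simp add: abs_minus_commute)
    have "I u y \<le> I u y0 + \<epsilon> * \<Phi> u" "I u y0 \<le> I u y + \<epsilon> * \<Phi> u"
      unfolding I_def \<Phi>_def
      using enn2real_nn_integral_param_le[OF u y y0 eps(1) close \<phi>]
        enn2real_nn_integral_param_le[OF u y0 y eps(1) close' \<phi>] by simp_all
    moreover have "\<epsilon> * \<Phi> u < \<epsilon> * (\<Phi> u0 + 1)"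
      using N1(3)[OF uN(1)] eps(1) by (intro mult_strict_left_mono) auto
    ultimately have "\<bar>I u y - I u0 y0\<bar> < e"
      using N2(3)[OF uN(2)] eps(2) by linarith
    then show "\<bar>enn2real (\<integral>\<^sup>+ x. ennreal (F (x, y)) \<partial>lam u) -
        enn2real (\<integral>\<^sup>+ x. ennreal (F (x, y0)) \<partial>lam u0)\<bar> < e"
      by (simp add: I_def)
  qed
qed

lemma continuous_map_nn_integral_param:
  "continuous_map (prod_topology (subtopology X U) Y) euclideanreal
     (\<lambda>(u, y). enn2real (\<integral>\<^sup>+ x. ennreal (F (x, y)) \<partial>lam u))"
  unfolding continuous_map_real_iff
proof (intro ballI allI impI)
  fix z and e :: real assume "z \<in> topspace (prod_topology (subtopology X U) Y)" "e > 0"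
  then obtain u0 y0 where z: "z = (u0, y0)" "u0 \<in> topspace (subtopology X U)" "y0 \<in> topspace Y"
    by auto
  obtain N where "openin (prod_topology (subtopology X U) Y) N" "(u0, y0) \<in> N"
    "\<And>u y. (u, y) \<in> N \<Longrightarrow> \<bar>enn2real (\<integral>\<^sup>+ x. ennreal (F (x, y)) \<partial>lam u) -
        enn2real (\<integral>\<^sup>+ x. ennreal (F (x, y0)) \<partial>lam u0)\<bar> < e"
    by (rule nn_integral_param_nbhd[OF z(2,3) \<open>e > 0\<close>]) blast
  then show "\<exists>N. openin (prod_topology (subtopology X U) Y) N \<and> z \<in> N \<and>
      (\<forall>w\<in>N. \<bar>(\<lambda>(u, y). enn2real (\<integral>\<^sup>+ x. ennreal (F (x, y)) \<partial>lam u)) w -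
        (\<lambda>(u, y). enn2real (\<integral>\<^sup>+ x. ennreal (F (x, y)) \<partial>lam u)) z\<bar> < e)"
    using z(1) by (intro exI[of _ N]) auto
qed

end

end

lemma continuous_map_nn_integral_inner:
  assumes F3: "cc_continuous_family X3 U3 lam3"
    and h_cont: "continuous_map (prod_topology X1 (prod_topology Y X3)) euclideanreal h"
    and h_nonneg: "\<And>z. z \<in> topspace (prod_topology X1 (prod_topology Y X3)) \<Longrightarrow> 0 \<le> h z"
    and L: "compactin (prod_topology X1 (prod_topology Y X3)) L"
      "\<And>z. z \<in> topspace (prod_topology X1 (prod_topology Y X3)) - L \<Longrightarrow> h z = 0"
  shows "continuous_map (prod_topology X1 (prod_topology Y (subtopology X3 U3))) euclideanreal
      (\<lambda>(x1, y, u3). enn2real (\<integral>\<^sup>+ x3. ennreal (h (x1, y, x3)) \<partial>lam3 u3))"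
    and "u3 \<in> U3 \<Longrightarrow> x1 \<in> topspace X1 \<Longrightarrow> y \<in> topspace Y \<Longrightarrow>
      (\<integral>\<^sup>+ x3. ennreal (h (x1, y, x3)) \<partial>lam3 u3) < \<infinity>"
proof -
  interpret F3: cc_continuous_family X3 U3 lam3 by (rule F3)
  define F where "F = (\<lambda>(x3, x1, y). h (x1, y, x3))"
  have "continuous_map (prod_topology X3 (prod_topology X1 Y)) (prod_topology X1 (prod_topology Y X3))
      (\<lambda>(x3, x1, y). (x1, y, x3))"
    using continuous_map_compose[OF continuous_map_snd continuous_map_fst, of X3 X1 Y]
      continuous_map_compose[OF continuous_map_snd continuous_map_snd, of X3 X1 Y]
    by (simp add: continuous_map_paired case_prod_unfold o_def continuous_map_fst)
  from continuous_map_compose[OF this h_cont]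
  have F_cont: "continuous_map (prod_topology X3 (prod_topology X1 Y)) euclideanreal F"
    by (simp add: F_def o_def case_prod_unfold)
  have F_nonneg: "0 \<le> F (x3, w)" if "x3 \<in> topspace X3" "w \<in> topspace (prod_topology X1 Y)" for x3 w
    using that h_nonneg by (auto simp: F_def)
  have K3: "compactin X3 ((\<lambda>z. snd (snd z)) ` L)"
    using image_compactin[OF L(1) continuous_map_compose[OF continuous_map_snd continuous_map_snd]]
    by (simp add: o_def)
  have F_support: "F (x3, w) = 0"
    if "x3 \<in> topspace X3 - (\<lambda>z. snd (snd z)) ` L" "w \<in> topspace (prod_topology X1 Y)" for x3 w
  proof -
    obtain x1 y where w: "w = (x1, y)"
      by fastforce
    have "(x1, y, x3) \<notin> L"
      using that(1) by force
    then show ?thesis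
      using that L(2) w by (simp add: F_def)
  qed
  have "continuous_map (prod_topology X1 (prod_topology Y (subtopology X3 U3)))
      (prod_topology (subtopology X3 U3) (prod_topology X1 Y)) (\<lambda>(x1, y, u3). (u3, x1, y))"
    using continuous_map_compose[OF continuous_map_snd continuous_map_fst, of X1 Y "subtopology X3 U3"]
      continuous_map_compose[OF continuous_map_snd continuous_map_snd, of X1 Y "subtopology X3 U3"]
    by (simp add: continuous_map_paired case_prod_unfold o_def continuous_map_fst)
  from continuous_map_compose[OF this F3.continuous_map_nn_integral_param[OF F_cont F_nonneg K3 F_support]]
  show "continuous_map (prod_topology X1 (prod_topology Y (subtopology X3 U3))) euclideanreal
      (\<lambda>(x1, y, u3). enn2real (\<integral>\<^sup>+ x3. ennreal (h (x1, y, x3)) \<partial>lam3 u3))"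
    by (simp add: F_def o_def case_prod_unfold)
  show "u3 \<in> U3 \<Longrightarrow> x1 \<in> topspace X1 \<Longrightarrow> y \<in> topspace Y \<Longrightarrow>
      (\<integral>\<^sup>+ x3. ennreal (h (x1, y, x3)) \<partial>lam3 u3) < \<infinity>"
    using F3.nn_integral_param_finite[OF F_cont F_nonneg K3 F_support, of u3 "(x1, y)"] by (simp add: F_def)
qed

lemma continuous_map_nn_integral_iterated:
  assumes F1: "cc_continuous_family X1 U1 lam1" and F3: "cc_continuous_family X3 U3 lam3"
    and h: "cc_nonneg (prod_topology X1 (prod_topology Y X3)) h"
  shows "continuous_map (prod_topology (subtopology X1 U1) (prod_topology Y (subtopology X3 U3))) euclideanreal
      (\<lambda>(u1, y, u3). enn2real (\<integral>\<^sup>+ x1. \<integral>\<^sup>+ x3. ennreal (h (x1, y, x3)) \<partial>lam3 u3 \<partial>lam1 u1))"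
    and "u1 \<in> U1 \<Longrightarrow> y \<in> topspace Y \<Longrightarrow> u3 \<in> U3 \<Longrightarrow>
      (\<integral>\<^sup>+ x1. \<integral>\<^sup>+ x3. ennreal (h (x1, y, x3)) \<partial>lam3 u3 \<partial>lam1 u1) < \<infinity>"
proof -
  interpret F1: cc_continuous_family X1 U1 lam1 by (rule F1)
  interpret F3: cc_continuous_family X3 U3 lam3 by (rule F3)
  let ?X = "prod_topology X1 (prod_topology Y X3)"
  obtain L where L: "compactin ?X L" "\<And>z. z \<in> topspace ?X - L \<Longrightarrow> h z = 0"
    using h unfolding cc_nonneg_def by blast
  have h_cont: "continuous_map ?X euclideanreal h" and h_nonneg: "\<And>z. z \<in> topspace ?X \<Longrightarrow> 0 \<le> h z"
    using h unfolding cc_nonneg_def by blast+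
  define I3 where "I3 = (\<lambda>(x1, y, u3). enn2real (\<integral>\<^sup>+ x3. ennreal (h (x1, y, x3)) \<partial>lam3 u3))"
  note inner = continuous_map_nn_integral_inner[OF F3 h_cont h_nonneg L, folded I3_def]
  have I3_nonneg: "0 \<le> I3 z" for z
    by (simp add: I3_def case_prod_unfold)
  have K1: "compactin X1 (fst ` L)"
    by (rule image_compactin[OF L(1) continuous_map_fst])
  have I3_support: "I3 (x1, w) = 0"
    if "x1 \<in> topspace X1 - fst ` L" "w \<in> topspace (prod_topology Y (subtopology X3 U3))" for x1 w
  proof -
    obtain y u3 where w: "w = (y, u3)"
      by fastforce
    have "(x1, y, x3) \<notin> L" for x3
      using that(1) by force
    then have "(\<integral>\<^sup>+ x3. ennreal (h (x1, y, x3)) \<partial>lam3 u3) = (\<integral>\<^sup>+ x3. 0 \<partial>lam3 u3)"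
      using that L(2) F3.space_lam w by (intro nn_integral_cong) auto
    then show ?thesis
      by (simp add: I3_def w)
  qed
  note outer = F1.continuous_map_nn_integral_param[OF inner(1) I3_nonneg K1 I3_support]
    F1.nn_integral_param_finite[OF inner(1) I3_nonneg K1 I3_support]
  have I3_eq: "(\<integral>\<^sup>+ x1. ennreal (I3 (x1, y, u3)) \<partial>lam1 u1) =
      (\<integral>\<^sup>+ x1. \<integral>\<^sup>+ x3. ennreal (h (x1, y, x3)) \<partial>lam3 u3 \<partial>lam1 u1)"
    if "u1 \<in> U1" "y \<in> topspace Y" "u3 \<in> U3" for u1 y u3
    using that inner(2) F1.space_lam by (intro nn_integral_cong) (simp add: I3_def)
  show "continuous_map (prod_topology (subtopology X1 U1) (prod_topology Y (subtopology X3 U3))) euclideanreal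
      (\<lambda>(u1, y, u3). enn2real (\<integral>\<^sup>+ x1. \<integral>\<^sup>+ x3. ennreal (h (x1, y, x3)) \<partial>lam3 u3 \<partial>lam1 u1))"
    using outer(1) by (rule continuous_map_eq) (auto simp: I3_eq)
  show "u1 \<in> U1 \<Longrightarrow> y \<in> topspace Y \<Longrightarrow> u3 \<in> U3 \<Longrightarrow>
      (\<integral>\<^sup>+ x1. \<integral>\<^sup>+ x3. ennreal (h (x1, y, x3)) \<partial>lam3 u3 \<partial>lam1 u1) < \<infinity>"
    using outer(2)[of u1 "(y, u3)"] I3_eq F3.subset_topspace by auto
qed

lemma nn_integral_pair_return_pair:
  assumes sf: "sigma_finite_measure M3" and x: "x \<in> space M2"
    and f: "f \<in> borel_measurable (M1 \<Otimes>\<^sub>M (return M2 x \<Otimes>\<^sub>M M3))"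
  shows "(\<integral>\<^sup>+ z. f z \<partial>(M1 \<Otimes>\<^sub>M (return M2 x \<Otimes>\<^sub>M M3))) = (\<integral>\<^sup>+ a. \<integral>\<^sup>+ c. f (a, x, c) \<partial>M3 \<partial>M1)"
proof -
  interpret R: prob_space "return M2 x"
    by (rule prob_space_return[OF x])
  interpret R3: sigma_finite_measure "return M2 x \<Otimes>\<^sub>M M3"
    by (rule sigma_finite_pair_measure[OF R.sigma_finite_measure_axioms sf])
  have "(\<integral>\<^sup>+ z. f z \<partial>(M1 \<Otimes>\<^sub>M (return M2 x \<Otimes>\<^sub>M M3))) = (\<integral>\<^sup>+ a. \<integral>\<^sup>+ y. f (a, y) \<partial>(return M2 x \<Otimes>\<^sub>M M3) \<partial>M1)"
    using R3.nn_integral_fst[OF f] by simp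
  also have "\<dots> = (\<integral>\<^sup>+ a. \<integral>\<^sup>+ c. f (a, x, c) \<partial>M3 \<partial>M1)"
  proof (rule nn_integral_cong)
    fix a assume a: "a \<in> space M1"
    have fa: "(\<lambda>y. f (a, y)) \<in> borel_measurable (return M2 x \<Otimes>\<^sub>M M3)"
      using measurable_Pair2[OF f a] .
    have "(\<integral>\<^sup>+ y. f (a, y) \<partial>(return M2 x \<Otimes>\<^sub>M M3)) = (\<integral>\<^sup>+ b. \<integral>\<^sup>+ c. f (a, b, c) \<partial>M3 \<partial>return M2 x)"
      using sigma_finite_measure.nn_integral_fst[OF sf fa] by simp
    also have "\<dots> = (\<integral>\<^sup>+ c. f (a, x, c) \<partial>M3)"
      using sigma_finite_measure.borel_measurable_nn_integral_fst[OF sf fa]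
      by (intro nn_integral_return[OF x]) (simp cong: measurable_cong_sets)
    finally show "(\<integral>\<^sup>+ y. f (a, y) \<partial>(return M2 x \<Otimes>\<^sub>M M3)) = (\<integral>\<^sup>+ c. f (a, x, c) \<partial>M3)" .
  qed
  finally show ?thesis .
qed

lemma measurable_pair_return_pair_slices:
  assumes sf: "sigma_finite_measure M3" and x: "x \<in> space M2"
    and f: "f \<in> borel_measurable (M1 \<Otimes>\<^sub>M (return M2 x \<Otimes>\<^sub>M M3))"
  shows "a \<in> space M1 \<Longrightarrow> (\<lambda>c. f (a, x, c)) \<in> borel_measurable M3"
    and "(\<lambda>a. \<integral>\<^sup>+ c. f (a, x, c) \<partial>M3) \<in> borel_measurable M1"
proof -
  show "a \<in> space M1 \<Longrightarrow> (\<lambda>c. f (a, x, c)) \<in> borel_measurable M3"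
    using measurable_Pair2[OF measurable_Pair2[OF f], of a x] x by simp
  have "(\<lambda>z. (fst z, x, snd z)) \<in> measurable (M1 \<Otimes>\<^sub>M M3) (M1 \<Otimes>\<^sub>M (return M2 x \<Otimes>\<^sub>M M3))"
    using x by (intro measurable_Pair) simp_all
  from measurable_compose[OF this f]
  have "(\<lambda>z. f (fst z, x, snd z)) \<in> borel_measurable (M1 \<Otimes>\<^sub>M M3)" .
  from sigma_finite_measure.borel_measurable_nn_integral_fst[OF sf this]
  show "(\<lambda>a. \<integral>\<^sup>+ c. f (a, x, c) \<partial>M3) \<in> borel_measurable M1"
    by simp
qed

section \<open>Groupoids\<close>

locale Groupoid =
  fixes G :: "('a, 'b) tgroupoid_scheme"
  assumes groupoid: "groupoid G"
begin

lemma unit_arr: "u \<in> gunits G \<Longrightarrow> u \<in> garr G"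
  and r_unit [simp]: "u \<in> gunits G \<Longrightarrow> gr G u = u"
  and d_unit [simp]: "u \<in> gunits G \<Longrightarrow> gd G u = u"
  and r_unit_mem: "x \<in> garr G \<Longrightarrow> gr G x \<in> gunits G"
  and d_unit_mem: "x \<in> garr G \<Longrightarrow> gd G x \<in> gunits G"
  using groupoid unfolding groupoid_def by blast+

lemma r_arr: "x \<in> garr G \<Longrightarrow> gr G x \<in> garr G"
  and d_arr: "x \<in> garr G \<Longrightarrow> gd G x \<in> garr G"
  by (simp_all add: unit_arr r_unit_mem d_unit_mem)

lemma mul_arr: "x \<in> garr G \<Longrightarrow> y \<in> garr G \<Longrightarrow> gd G x = gr G y \<Longrightarrow> gmul G x y \<in> garr G"
  and r_mul [simp]: "x \<in> garr G \<Longrightarrow> y \<in> garr G \<Longrightarrow> gd G x = gr G y \<Longrightarrow> gr G (gmul G x y) = gr G x"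
  and d_mul [simp]: "x \<in> garr G \<Longrightarrow> y \<in> garr G \<Longrightarrow> gd G x = gr G y \<Longrightarrow> gd G (gmul G x y) = gd G y"
  using groupoid unfolding groupoid_def composable_def by fast+

lemma mul_assoc:
  "x \<in> garr G \<Longrightarrow> y \<in> garr G \<Longrightarrow> z \<in> garr G \<Longrightarrow> gd G x = gr G y \<Longrightarrow> gd G y = gr G z \<Longrightarrow>
    gmul G (gmul G x y) z = gmul G x (gmul G y z)"
  using groupoid unfolding groupoid_def by blast

lemma r_mul_id [simp]: "x \<in> garr G \<Longrightarrow> gmul G (gr G x) x = x"
  and mul_d_id [simp]: "x \<in> garr G \<Longrightarrow> gmul G x (gd G x) = x"
  using groupoid unfolding groupoid_def by blast+

lemma inv_arr [simp]: "x \<in> garr G \<Longrightarrow> ginv G x \<in> garr G"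
  and r_inv [simp]: "x \<in> garr G \<Longrightarrow> gr G (ginv G x) = gd G x"
  and d_inv [simp]: "x \<in> garr G \<Longrightarrow> gd G (ginv G x) = gr G x"
  and mul_inv [simp]: "x \<in> garr G \<Longrightarrow> gmul G x (ginv G x) = gr G x"
  and inv_mul [simp]: "x \<in> garr G \<Longrightarrow> gmul G (ginv G x) x = gd G x"
  using groupoid unfolding groupoid_def by blast+

lemma inv_mul_cancel_left:
  assumes x: "x \<in> garr G" and y: "y \<in> garr G" "gr G y = gd G x"
  shows "gmul G (ginv G x) (gmul G x y) = y"
proof -
  have "gmul G (ginv G x) (gmul G x y) = gmul G (gmul G (ginv G x) x) y"
    using mul_assoc[of "ginv G x" x y] x y by simp
  also have "\<dots> = gmul G (gr G y) y"
    using x y by simp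
  finally show ?thesis
    using r_mul_id[OF y(1)] y(2) by simp
qed

lemma mul_inv_cancel_left:
  assumes x: "x \<in> garr G" and y: "y \<in> garr G" "gr G y = gr G x"
  shows "gmul G x (gmul G (ginv G x) y) = y"
proof -
  have "gmul G x (gmul G (ginv G x) y) = gmul G (gmul G x (ginv G x)) y"
    using mul_assoc[of x "ginv G x" y] x y by simp
  also have "\<dots> = gmul G (gr G y) y"
    using x y by simp
  finally show ?thesis
    using r_mul_id[OF y(1)] y(2) by simp
qed

lemma idempotent_unit:
  assumes x: "x \<in> garr G" "gd G x = gr G x" and xx: "gmul G x x = x"
  shows "gr G x = x"
proof -
  have "gr G x = gmul G (gmul G x x) (ginv G x)"
    using x xx by simp
  also have "\<dots> = gmul G x (gmul G x (ginv G x))"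
    using mul_assoc[of x x "ginv G x"] x by simp
  also have "\<dots> = x"
    using mul_d_id[OF x(1)] x by simp
  finally show ?thesis .
qed

text \<open>Translation by \<open>x\<^sup>-\<^sup>1\<close> is only meaningful on \<open>G\<^bsup>r x\<^esub>\<close>; the junk value \<open>d x\<close> elsewhere
  keeps the map inside the arrows.\<close>

definition inv_translate :: "'a \<Rightarrow> 'a \<Rightarrow> 'a" where
  "inv_translate x y = (if y \<in> rfib G (gr G x) then gmul G (ginv G x) y else gd G x)"

lemma inv_translate_arr: "x \<in> garr G \<Longrightarrow> inv_translate x y \<in> garr G"
  unfolding inv_translate_def rfib_def by (auto intro: mul_arr inv_arr d_arr)

lemma inv_translate_rfib: "x \<in> garr G \<Longrightarrow> y \<in> rfib G (gr G x) \<Longrightarrow> inv_translate x y \<in> rfib G (gd G x)"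
  unfolding inv_translate_def rfib_def by (auto intro: mul_arr inv_arr)

lemma ltrans_rfib_eq:
  assumes x: "x \<in> garr G"
  shows "ltrans G x (B \<inter> rfib G (gd G x)) = {y \<in> rfib G (gr G x). inv_translate x y \<in> B}"
proof (intro set_eqI iffI)
  fix y assume "y \<in> ltrans G x (B \<inter> rfib G (gd G x))"
  then obtain z where z: "z \<in> B" "z \<in> garr G" "gr G z = gd G x" "y = gmul G x z"
    unfolding ltrans_def rfib_def by auto
  then have "y \<in> rfib G (gr G x)" "gmul G (ginv G x) y = z"
    using x inv_mul_cancel_left[OF x z(2,3)] by (auto simp: rfib_def intro: mul_arr)
  then show "y \<in> {y \<in> rfib G (gr G x). inv_translate x y \<in> B}"
    using z(1) by (simp add: inv_translate_def)
next
  fix y assume "y \<in> {y \<in> rfib G (gr G x). inv_translate x y \<in> B}"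
  then have y: "y \<in> garr G" "gr G y = gr G x" "gmul G (ginv G x) y \<in> B"
    unfolding rfib_def inv_translate_def by auto
  then have "gmul G (ginv G x) y \<in> B \<inter> rfib G (gd G x)"
    using x by (auto simp: rfib_def intro: mul_arr)
  then show "y \<in> ltrans G x (B \<inter> rfib G (gd G x))"
    unfolding ltrans_def using mul_inv_cancel_left[OF x y(1,2)] by (metis image_eqI)
qed

end

locale Groupoid_hom = S: Groupoid S + G: Groupoid G
  for S :: "('a, 'b) tgroupoid_scheme" and G :: "('c, 'd) tgroupoid_scheme" +
  fixes p :: "'a \<Rightarrow> 'c"
  assumes hom: "groupoid_hom S G p"
begin

lemma map_arr: "x \<in> garr S \<Longrightarrow> p x \<in> garr G"
  using hom unfolding groupoid_hom_def by blast

lemma map_mul: "x \<in> garr S \<Longrightarrow> y \<in> garr S \<Longrightarrow> gd S x = gr S y \<Longrightarrow> gmul G (p x) (p y) = p (gmul S x y)"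
  and d_map_r_map: "x \<in> garr S \<Longrightarrow> y \<in> garr S \<Longrightarrow> gd S x = gr S y \<Longrightarrow> gd G (p x) = gr G (p y)"
  using hom unfolding groupoid_hom_def composable_def by fast+

lemma map_unit:
  assumes u: "u \<in> gunits S"
  shows "gr G (p u) = p u" "gd G (p u) = p u"
proof -
  have ua: "u \<in> garr S"
    using u by (rule S.unit_arr)
  have "gmul G (p u) (p u) = p u" "gd G (p u) = gr G (p u)"
    using map_mul[OF ua ua] d_map_r_map[OF ua ua] S.mul_d_id[OF ua] u by simp_all
  then show "gr G (p u) = p u" "gd G (p u) = p u"
    using G.idempotent_unit[OF map_arr[OF ua]] by simp_all
qed

lemma map_r:
  assumes x: "x \<in> garr S"
  shows "p (gr S x) = gr G (p x)"
proof -
  have "gd G (p (gr S x)) = gr G (p x)"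
    using d_map_r_map[OF S.r_arr[OF x] x] S.r_unit_mem[OF x] by simp
  then show ?thesis
    using map_unit(2)[OF S.r_unit_mem[OF x]] by simp
qed

lemma map_d:
  assumes x: "x \<in> garr S"
  shows "p (gd S x) = gd G (p x)"
proof -
  have "gd G (p x) = gr G (p (gd S x))"
    using d_map_r_map[OF x S.d_arr[OF x]] S.d_unit_mem[OF x] by simp
  then show ?thesis
    using map_unit(1)[OF S.d_unit_mem[OF x]] by simp
qed

end

section \<open>Groupoids with a continuous left Haar system\<close>

locale Haar_system = Groupoid G for G :: "('a, 'b) tgroupoid_scheme" +
  fixes lam :: "'a \<Rightarrow> 'a measure"
  assumes lcsc: "lcsc_groupoid G" and Haar: "cont_left_haar_system G lam"
begin

lemma continuous_map_r: "continuous_map (gtop G) (gtop G) (gr G)"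
  and continuous_map_mul:
    "continuous_map (subtopology (prod_topology (gtop G) (gtop G)) (composable G)) (gtop G) (\<lambda>(x, y). gmul G x y)"
  using lcsc unfolding lcsc_groupoid_def topological_groupoid_def by blast+

lemma emeasure_lam_compl_rfib: "u \<in> gunits G \<Longrightarrow> emeasure (lam u) (garr G - rfib G u) = 0"
  and emeasure_lam_pos:
    "u \<in> gunits G \<Longrightarrow> openin (gtop G) A \<Longrightarrow> A \<inter> rfib G u \<noteq> {} \<Longrightarrow> emeasure (lam u) A > 0"
  and left_invariant_lam: "left_invariant G lam"
  using Haar unfolding cont_left_haar_system_def system_of_measures_def positive_on_open_def by blast+

sublocale cc_continuous_family "gtop G" "gunits G" lam
  using lcsc Haar unit_arr
  unfolding cc_continuous_family_def lcsc_groupoid_def cont_left_haar_system_def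
    system_of_measures_def continuous_system_def
  by blast

lemma closedin_rfib: "u \<in> gunits G \<Longrightarrow> closedin (gtop G) (rfib G u)"
  using closedin_continuous_map_preimage[OF continuous_map_r
      closedin_t1_singleton[OF Hausdorff_imp_t1_space[OF Hausdorff]], of u]
  by (simp add: rfib_def unit_arr)

lemma rfib_sets: "u \<in> gunits G \<Longrightarrow> rfib G u \<in> sets (borel_of (gtop G))"
  by (rule borel_of_closed[OF closedin_rfib])

lemma compl_rfib_sets: "u \<in> gunits G \<Longrightarrow> garr G - rfib G u \<in> sets (borel_of (gtop G))"
  using sets.compl_sets[OF rfib_sets] by simp

lemma compl_rfib_null: "u \<in> gunits G \<Longrightarrow> garr G - rfib G u \<in> null_sets (lam u)"
  using emeasure_lam_compl_rfib compl_rfib_sets sets_lam by (simp add: null_sets_def)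

lemma AE_rfib: "u \<in> gunits G \<Longrightarrow> AE x in lam u. x \<in> rfib G u"
  using compl_rfib_null space_lam by (intro AE_I'[of "garr G - rfib G u"]) auto

lemma continuous_map_translate:
  assumes x: "x \<in> garr G"
  shows "continuous_map (subtopology (gtop G) (rfib G (gd G x))) (gtop G) (gmul G x)"
proof -
  let ?D = "subtopology (gtop G) (rfib G (gd G x))"
  have "continuous_map ?D (prod_topology (gtop G) (gtop G)) (\<lambda>y. (x, y))"
    using x by (simp add: continuous_map_paired continuous_map_from_subtopology)
  moreover have "(\<lambda>y. (x, y)) \<in> topspace ?D \<rightarrow> composable G"
    unfolding composable_def rfib_def using x by auto
  ultimately have "continuous_map ?D (subtopology (prod_topology (gtop G) (gtop G)) (composable G)) (\<lambda>y. (x, y))"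
    by (simp add: continuous_map_in_subtopology)
  from continuous_map_compose[OF this continuous_map_mul] show ?thesis
    by (simp add: o_def)
qed

lemma sets_translate_preimage:
  assumes x: "x \<in> garr G" and B: "B \<in> sets (borel_of (gtop G))"
  shows "{y \<in> rfib G (gd G x). gmul G x y \<in> B} \<in> sets (borel_of (gtop G))"
proof -
  let ?D = "subtopology (gtop G) (rfib G (gd G x))"
  have "gmul G x -` B \<inter> space (borel_of ?D) \<in> sets (borel_of ?D)"
    by (rule measurable_sets[OF continuous_map_measurable_borel_of[OF continuous_map_translate[OF x]] B])
  moreover have "gmul G x -` B \<inter> space (borel_of ?D) = {y \<in> rfib G (gd G x). gmul G x y \<in> B}"
    unfolding rfib_def by auto
  ultimately show ?thesis
    using sets_borel_of_subtopology_subset[OF rfib_sets[OF d_unit_mem[OF x]]] by auto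
qed

lemma measurable_inv_translate:
  assumes x: "x \<in> garr G"
  shows "inv_translate x \<in> measurable (borel_of (gtop G)) (borel_of (gtop G))"
proof (rule measurableI)
  fix B assume B: "B \<in> sets (borel_of (gtop G))"
  have "inv_translate x -` B \<inter> space (borel_of (gtop G)) =
      {y \<in> rfib G (gd G (ginv G x)). gmul G (ginv G x) y \<in> B} \<union>
      (if gd G x \<in> B then garr G - rfib G (gr G x) else {})"
    using x by (auto simp: inv_translate_def rfib_def split: if_splits)
  then show "inv_translate x -` B \<inter> space (borel_of (gtop G)) \<in> sets (borel_of (gtop G))"
    using sets_translate_preimage[OF inv_arr[OF x] B] compl_rfib_sets[OF r_unit_mem[OF x]] by auto
qed (use inv_translate_arr x in simp)

lemma continuous_map_inv_translate:
  assumes x: "x \<in> garr G"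
  shows "continuous_map (subtopology (gtop G) (rfib G (gr G x))) (gtop G) (inv_translate x)"
proof -
  have "continuous_map (subtopology (gtop G) (rfib G (gr G x))) (gtop G) (gmul G (ginv G x))"
    using continuous_map_translate[OF inv_arr[OF x]] x by simp
  then show ?thesis
    by (rule continuous_map_eq) (auto simp: inv_translate_def)
qed

lemma distr_inv_translate:
  assumes x: "x \<in> garr G"
  shows "distr (lam (gr G x)) (borel_of (gtop G)) (inv_translate x) = lam (gd G x)"
proof (rule measure_eqI)
  have ru: "gr G x \<in> gunits G" and du: "gd G x \<in> gunits G"
    using x by (simp_all add: r_unit_mem d_unit_mem)
  have meas: "inv_translate x \<in> measurable (lam (gr G x)) (borel_of (gtop G))"
    using measurable_inv_translate[OF x] by (simp add: measurable_lam_eq[OF ru])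
  show "sets (distr (lam (gr G x)) (borel_of (gtop G)) (inv_translate x)) = sets (lam (gd G x))"
    using sets_lam[OF du] by simp
  fix B assume "B \<in> sets (distr (lam (gr G x)) (borel_of (gtop G)) (inv_translate x))"
  then have B: "B \<in> sets (borel_of (gtop G))"
    by simp
  define R where "R = inv_translate x -` B \<inter> (garr G - rfib G (gr G x))"
  have pre: "inv_translate x -` B \<inter> space (lam (gr G x)) = ltrans G x (B \<inter> rfib G (gd G x)) \<union> R"
    unfolding ltrans_rfib_eq[OF x] R_def using space_lam[OF ru] by (auto simp: rfib_def)
  have "R \<in> null_sets (lam (gr G x))"
  proof (rule null_sets_subset)
    show "garr G - rfib G (gr G x) \<in> null_sets (lam (gr G x))"
      by (rule compl_rfib_null[OF ru])
    show "R \<in> sets (lam (gr G x))"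
      using measurable_sets[OF meas B] rfib_sets[OF ru] sets_lam[OF ru] space_lam[OF ru]
      unfolding R_def by (auto simp: Int_Diff[symmetric] intro: sets.Diff)
  qed (auto simp: R_def)
  moreover have "ltrans G x (B \<inter> rfib G (gd G x)) = (inv_translate x -` B \<inter> space (lam (gr G x))) \<inter> rfib G (gr G x)"
    unfolding ltrans_rfib_eq[OF x] using space_lam[OF ru] by (auto simp: rfib_def)
  then have "ltrans G x (B \<inter> rfib G (gd G x)) \<in> sets (lam (gr G x))"
    using measurable_sets[OF meas B] rfib_sets[OF ru] sets_lam[OF ru] by auto
  ultimately have "emeasure (distr (lam (gr G x)) (borel_of (gtop G)) (inv_translate x)) B =
      emeasure (lam (gr G x)) (ltrans G x (B \<inter> rfib G (gd G x)))"
    using emeasure_distr[OF meas B] pre by (simp add: emeasure_Un_null_set)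
  also have "\<dots> = emeasure (lam (gd G x)) B"
    using left_invariant_lam x B unfolding left_invariant_def by simp
  finally show "emeasure (distr (lam (gr G x)) (borel_of (gtop G)) (inv_translate x)) B = emeasure (lam (gd G x)) B" .
qed

lemma nn_integral_inv_translate:
  assumes x: "x \<in> garr G" and k: "k \<in> borel_measurable (borel_of (gtop G))"
  shows "(\<integral>\<^sup>+ y. k y \<partial>lam (gd G x)) = (\<integral>\<^sup>+ y. k (inv_translate x y) \<partial>lam (gr G x))"
proof -
  have "inv_translate x \<in> measurable (lam (gr G x)) (borel_of (gtop G))"
    using measurable_inv_translate[OF x] by (simp add: measurable_lam_eq[OF r_unit_mem[OF x]])
  then have "(\<integral>\<^sup>+ y. k y \<partial>distr (lam (gr G x)) (borel_of (gtop G)) (inv_translate x)) =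
      (\<integral>\<^sup>+ y. k (inv_translate x y) \<partial>lam (gr G x))"
    using k by (intro nn_integral_distr) simp_all
  then show ?thesis
    by (simp add: distr_inv_translate[OF x])
qed

end

section \<open>The Haar system of the weak pullback\<close>

locale Weak_pullback =
  S: Haar_system S lamS + T: Haar_system T lamT + G: Groupoid G
  for S :: "('s, 'x) tgroupoid_scheme" and lamS :: "'s \<Rightarrow> 's measure"
    and T :: "('t, 'z) tgroupoid_scheme" and lamT :: "'t \<Rightarrow> 't measure"
    and G :: "('g, 'y) tgroupoid_scheme" +
  fixes p :: "'s \<Rightarrow> 'g" and q :: "'t \<Rightarrow> 'g"
  assumes lcsc_G: "lcsc_groupoid G"
    and continuous_p: "continuous_map (gtop S) (gtop G) p" and hom_p: "groupoid_hom S G p"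
    and continuous_q: "continuous_map (gtop T) (gtop G) q" and hom_q: "groupoid_hom T G q"
begin

sublocale p: Groupoid_hom S G p
  by unfold_locales (fact hom_p)

sublocale q: Groupoid_hom T G q
  by unfold_locales (fact hom_q)

abbreviation "Z \<equiv> prod_topology (gtop S) (prod_topology (gtop G) (gtop T))"
abbreviation "W \<equiv> wp_set S G T p q"
abbreviation "P \<equiv> weak_pullback S G T p q"
abbreviation "lamP \<equiv> pullback_system S G T p q lamS lamT"

definition lamZ :: "'s \<Rightarrow> 'g \<Rightarrow> 't \<Rightarrow> ('s \<times> 'g \<times> 't) measure" where
  "lamZ s g t = lamS s \<Otimes>\<^sub>M (return (borel_of (gtop G)) g \<Otimes>\<^sub>M lamT t)"

lemma G_Hausdorff: "Hausdorff_space (gtop G)"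
  and G_locally_compact: "locally_compact_space (gtop G)"
  and G_second_countable: "second_countable (gtop G)"
  and G_continuous_r: "continuous_map (gtop G) (gtop G) (gr G)"
  and G_continuous_d: "continuous_map (gtop G) (gtop G) (gd G)"
  using lcsc_G unfolding lcsc_groupoid_def topological_groupoid_def by blast+

lemma mem_W_iff [simp]:
  "(s, g, t) \<in> W \<longleftrightarrow> s \<in> garr S \<and> g \<in> garr G \<and> t \<in> garr T \<and> gr G g = gr G (p s) \<and> gd G g = gr G (q t)"
  by (simp add: wp_set_def)

lemma W_subset: "W \<subseteq> topspace Z"
  by (auto simp: wp_set_def)

lemma gtop_P: "gtop P = subtopology Z W"
  by (simp add: weak_pullback_def)

lemma garr_P [simp]: "garr P = W"
  unfolding gtop_P using W_subset by (rule topspace_subtopology_subset)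

lemma gunits_P_iff:
  "(s, g, t) \<in> gunits P \<longleftrightarrow> s \<in> gunits S \<and> t \<in> gunits T \<and> g \<in> garr G \<and> gr G g = p s \<and> gd G g = q t"
  by (simp add: weak_pullback_def)

lemma gr_P [simp]: "gr P (s, g, t) = (gr S s, g, gr T t)"
  and gd_P [simp]: "gd P (s, g, t) = (gd S s, gmul G (gmul G (ginv G (p s)) g) (q t), gd T t)"
  and gmul_P [simp]: "gmul P (s, g, t) (\<sigma>, h, \<tau>) = (gmul S s \<sigma>, g, gmul T t \<tau>)"
  by (simp_all add: weak_pullback_def)

lemma rfib_P_iff:
  assumes "(s, g, t) \<in> gunits P"
  shows "(\<sigma>, h, \<tau>) \<in> rfib P (s, g, t) \<longleftrightarrow> \<sigma> \<in> rfib S s \<and> h = g \<and> \<tau> \<in> rfib T t"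
  using assms p.map_r q.map_r by (auto simp: gunits_P_iff rfib_def)

lemma rfib_P_mem_W:
  assumes "(s, g, t) \<in> gunits P" "\<sigma> \<in> rfib S s" "\<tau> \<in> rfib T t"
  shows "(\<sigma>, g, \<tau>) \<in> rfib P (s, g, t)" "(\<sigma>, g, \<tau>) \<in> W"
  using rfib_P_iff[OF assms(1)] assms(2,3) by (auto simp: rfib_def[of P])

lemma gunits_P_subset: "gunits P \<subseteq> W"
  by (auto simp: gunits_P_iff S.unit_arr T.unit_arr p.map_unit q.map_unit)

lemma r_P_unit: "(s, g, t) \<in> W \<Longrightarrow> (gr S s, g, gr T t) \<in> gunits P"
  by (auto simp: gunits_P_iff S.r_unit_mem T.r_unit_mem p.map_r q.map_r)

lemma d_P_unit:
  assumes x: "(s, g, t) \<in> W"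
  shows "(gd S s, gmul G (gmul G (ginv G (p s)) g) (q t), gd T t) \<in> gunits P"
proof -
  have s: "s \<in> garr S" and g: "g \<in> garr G" and t: "t \<in> garr T"
    and rg: "gr G g = gr G (p s)" and dg: "gd G g = gr G (q t)"
    using x by simp_all
  have "gmul G (ginv G (p s)) g \<in> garr G" "gr G (gmul G (ginv G (p s)) g) = gd G (p s)"
    "gd G (gmul G (ginv G (p s)) g) = gd G g"
    using p.map_arr[OF s] g rg by (simp_all add: G.mul_arr)
  then show ?thesis
    using p.map_arr[OF s] q.map_arr[OF t] dg p.map_d[OF s] q.map_r[OF t] q.map_d[OF t]
    by (simp add: gunits_P_iff G.mul_arr S.d_unit_mem[OF s] T.d_unit_mem[OF t])
qed

lemma closedin_W: "closedin Z W"
proof -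
  have fst: "continuous_map Z (gtop S) fst"
    and fst_snd: "continuous_map Z (gtop G) (\<lambda>z. fst (snd z))"
    and snd_snd: "continuous_map Z (gtop T) (\<lambda>z. snd (snd z))"
    using continuous_map_compose[OF continuous_map_snd continuous_map_fst]
      continuous_map_compose[OF continuous_map_snd continuous_map_snd]
    by (simp_all add: o_def continuous_map_fst)
  have "W = {z \<in> topspace Z. gr G (fst (snd z)) = gr G (p (fst z))} \<inter>
      {z \<in> topspace Z. gd G (fst (snd z)) = gr G (q (snd (snd z)))}"
    by (auto simp: wp_set_def)
  moreover have "closedin Z {z \<in> topspace Z. gr G (fst (snd z)) = gr G (p (fst z))}"
    using continuous_map_compose[OF fst_snd G_continuous_r]
      continuous_map_compose[OF continuous_map_compose[OF fst continuous_p] G_continuous_r]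
    by (intro closedin_continuous_maps_eq[OF G_Hausdorff]) (simp_all add: o_def)
  moreover have "closedin Z {z \<in> topspace Z. gd G (fst (snd z)) = gr G (q (snd (snd z)))}"
    using continuous_map_compose[OF fst_snd G_continuous_d]
      continuous_map_compose[OF continuous_map_compose[OF snd_snd continuous_q] G_continuous_r]
    by (intro closedin_continuous_maps_eq[OF G_Hausdorff]) (simp_all add: o_def)
  ultimately show ?thesis
    by (simp add: closedin_Int)
qed

lemma locally_compact_Z: "locally_compact_space Z"
  and Hausdorff_Z: "Hausdorff_space Z"
  using S.locally_compact G_locally_compact T.locally_compact S.Hausdorff G_Hausdorff T.Hausdorff
  by (simp_all add: locally_compact_space_prod_topology Hausdorff_space_prod_topology)

lemma closedin_rfib_P:
  assumes u: "u \<in> gunits P"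
  shows "closedin (gtop P) (rfib P u)"
proof -
  have "continuous_map Z (gtop S) (\<lambda>z. gr S (fst z))"
    using continuous_map_compose[OF continuous_map_fst S.continuous_map_r] by (simp add: o_def)
  moreover have "continuous_map Z (gtop G) (\<lambda>z. fst (snd z))"
    using continuous_map_compose[OF continuous_map_snd continuous_map_fst] by (simp add: o_def)
  moreover have "continuous_map Z (gtop T) (\<lambda>z. gr T (snd (snd z)))"
    using continuous_map_compose[OF continuous_map_compose[OF continuous_map_snd continuous_map_snd]
        T.continuous_map_r] by (simp add: o_def)
  ultimately have "continuous_map Z Z (\<lambda>(s, g, t). (gr S s, g, gr T t))"
    by (simp add: continuous_map_paired case_prod_unfold)
  then have "continuous_map (gtop P) Z (gr P)"
    unfolding gtop_P
    by (rule continuous_map_eq[OF continuous_map_from_subtopology]) (auto simp: case_prod_unfold)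
  moreover have "u \<in> topspace Z"
    using u gunits_P_subset W_subset by blast
  ultimately have "closedin (gtop P) {x \<in> topspace (gtop P). gr P x \<in> {u}}"
    using closedin_continuous_map_preimage closedin_t1_singleton[OF Hausdorff_imp_t1_space[OF Hausdorff_Z]]
    by blast
  then show ?thesis
    by (simp add: rfib_def)
qed

lemma sets_borel_P_lamZ:
  assumes "s \<in> gunits S" "g \<in> garr G" "t \<in> gunits T"
  shows "sets (borel_of (gtop P)) \<subseteq> sets (lamZ s g t)"
proof -
  have "sets (borel_of (prod_topology (gtop G) (gtop T))) \<subseteq> sets (return (borel_of (gtop G)) g \<Otimes>\<^sub>M lamT t)"
    using assms(3) T.space_lam T.sets_lam
    by (intro sets_borel_of_prod_topology_subset[OF G_second_countable T.second_countable]) simp_all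
  then have "sets (borel_of Z) \<subseteq> sets (lamZ s g t)"
    using assms S.space_lam S.sets_lam T.space_lam unfolding lamZ_def
    by (intro sets_borel_of_prod_topology_subset[OF S.second_countable
          second_countable_prod_topology[OF G_second_countable T.second_countable]])
      (simp_all add: space_pair_measure)
  moreover have "sets (borel_of (gtop P)) \<subseteq> sets (borel_of Z)"
    unfolding gtop_P by (rule sets_borel_of_subtopology_subset[OF borel_of_closed[OF closedin_W]])
  ultimately show ?thesis
    by blast
qed

lemma space_lamZ: "s \<in> gunits S \<Longrightarrow> t \<in> gunits T \<Longrightarrow> space (lamZ s g t) = topspace Z"
  by (simp add: lamZ_def space_pair_measure S.space_lam T.space_lam)

lemma sets_lamP [simp]: "sets (lamP u) = sets (borel_of (gtop P))"
  and space_lamP [simp]: "space (lamP u) = W"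
proof -
  have "sigma_algebra W (sets (borel_of (gtop P)))"
    using sets.sigma_algebra_axioms[of "borel_of (gtop P)"] by simp
  then show "sets (lamP u) = sets (borel_of (gtop P))"
    by (cases u) (simp add: pullback_system_def sigma_algebra.sets_measure_of_eq)
  show "space (lamP u) = W"
    by (cases u) (simp add: pullback_system_def space_measure_of_conv)
qed

lemma emeasure_lamP:
  assumes "s \<in> gunits S" "g \<in> garr G" "t \<in> gunits T" and E: "E \<in> sets (borel_of (gtop P))"
  shows "emeasure (lamP (s, g, t)) E = emeasure (lamZ s g t) E"
proof -
  have sa: "sigma_algebra W (sets (borel_of (gtop P)))"
    using sets.sigma_algebra_axioms[of "borel_of (gtop P)"] by simp
  have ca: "countably_additive (sets (borel_of (gtop P))) (emeasure (lamZ s g t))"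
    using sets_borel_P_lamZ[OF assms(1-3)]
    by (auto simp: countably_additive_def intro!: suminf_emeasure)
  show ?thesis
    unfolding pullback_system_def lamZ_def[symmetric] prod.case
    by (rule emeasure_measure_of_sigma[OF sa _ ca E]) (simp add: positive_def)
qed

lemma nn_integral_fibres_cong:
  assumes "s \<in> gunits S" "t \<in> gunits T"
    and "\<And>\<sigma> \<tau>. \<sigma> \<in> rfib S s \<Longrightarrow> \<tau> \<in> rfib T t \<Longrightarrow> f \<sigma> \<tau> = f' \<sigma> \<tau>"
  shows "(\<integral>\<^sup>+ \<sigma>. \<integral>\<^sup>+ \<tau>. f \<sigma> \<tau> \<partial>lamT t \<partial>lamS s) = (\<integral>\<^sup>+ \<sigma>. \<integral>\<^sup>+ \<tau>. f' \<sigma> \<tau> \<partial>lamT t \<partial>lamS s)"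
  using S.AE_rfib[OF assms(1)]
proof (rule nn_integral_cong_AE[OF eventually_mono])
  fix \<sigma> assume "\<sigma> \<in> rfib S s"
  with T.AE_rfib[OF assms(2)] show "(\<integral>\<^sup>+ \<tau>. f \<sigma> \<tau> \<partial>lamT t) = (\<integral>\<^sup>+ \<tau>. f' \<sigma> \<tau> \<partial>lamT t)"
    by (intro nn_integral_cong_AE) (auto elim: eventually_mono simp: assms(3))
qed

lemma nn_integral_fibres_mono:
  assumes "s \<in> gunits S" "t \<in> gunits T"
    and "\<And>\<sigma> \<tau>. \<sigma> \<in> rfib S s \<Longrightarrow> \<tau> \<in> rfib T t \<Longrightarrow> f \<sigma> \<tau> \<le> f' \<sigma> \<tau>"
  shows "(\<integral>\<^sup>+ \<sigma>. \<integral>\<^sup>+ \<tau>. f \<sigma> \<tau> \<partial>lamT t \<partial>lamS s) \<le> (\<integral>\<^sup>+ \<sigma>. \<integral>\<^sup>+ \<tau>. f' \<sigma> \<tau> \<partial>lamT t \<partial>lamS s)"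
  using S.AE_rfib[OF assms(1)]
proof (rule nn_integral_mono_AE[OF eventually_mono])
  fix \<sigma> assume "\<sigma> \<in> rfib S s"
  with T.AE_rfib[OF assms(2)] show "(\<integral>\<^sup>+ \<tau>. f \<sigma> \<tau> \<partial>lamT t) \<le> (\<integral>\<^sup>+ \<tau>. f' \<sigma> \<tau> \<partial>lamT t)"
    by (intro nn_integral_mono_AE) (auto elim: eventually_mono simp: assms(3))
qed

lemma nn_integral_lamP_lamZ:
  assumes s: "s \<in> gunits S" and g: "g \<in> garr G" and t: "t \<in> gunits T"
    and k: "k \<in> borel_measurable (borel_of (gtop P))"
  shows "(\<integral>\<^sup>+ z. k z \<partial>lamP (s, g, t)) = (\<integral>\<^sup>+ z. k z * indicator W z \<partial>lamZ s g t)"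
    and "(\<lambda>z. k z * indicator W z) \<in> borel_measurable (lamZ s g t)"
proof -
  have W_lamZ: "W \<in> sets (lamZ s g t)" "W \<inter> space (lamZ s g t) = W"
    using sets_borel_P_lamZ[OF s g t] W_subset space_lamZ[OF s t]
      sets.top[of "borel_of (gtop P)"] by auto
  have sets_sub: "sets (lamP (s, g, t)) \<subseteq> sets (restrict_space (lamZ s g t) W)"
    using sets_borel_P_lamZ[OF s g t] sets.sets_into_space[of _ "borel_of (gtop P)"]
    by (fastforce simp: sets_restrict_space)
  have space_eq: "space (lamP (s, g, t)) = space (restrict_space (lamZ s g t) W)"
    using W_lamZ by (simp add: space_restrict_space)
  have "(\<integral>\<^sup>+ z. k z \<partial>lamP (s, g, t)) = (\<integral>\<^sup>+ z. k z \<partial>restrict_space (lamZ s g t) W)"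
  proof (rule nn_integral_subalgebra[OF _ sets_sub space_eq])
    show "k \<in> borel_measurable (lamP (s, g, t))"
      using k by (simp cong: measurable_cong_sets)
    fix E assume "E \<in> sets (lamP (s, g, t))"
    then show "emeasure (lamP (s, g, t)) E = emeasure (restrict_space (lamZ s g t) W) E"
      using emeasure_lamP[OF s g t] emeasure_restrict_space[of W "lamZ s g t" E] W_lamZ
        sets.sets_into_space[of E "borel_of (gtop P)"] by simp
  qed
  then show "(\<integral>\<^sup>+ z. k z \<partial>lamP (s, g, t)) = (\<integral>\<^sup>+ z. k z * indicator W z \<partial>lamZ s g t)"
    using W_lamZ by (simp add: nn_integral_restrict_space)
  have "measurable (borel_of (gtop P)) borel \<subseteq> measurable (restrict_space (lamZ s g t) W) borel"
    using sets_sub space_eq by (intro measurable_mono) auto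
  then have "k \<in> borel_measurable (restrict_space (lamZ s g t) W)"
    using k by blast
  then have "(\<lambda>z. if z \<in> W then k z else 0) \<in> borel_measurable (lamZ s g t)"
    using W_lamZ by (subst measurable_restrict_space_iff[symmetric]) simp_all
  then show "(\<lambda>z. k z * indicator W z) \<in> borel_measurable (lamZ s g t)"
    by (rule measurable_cong[THEN iffD1, rotated]) simp
qed

lemma nn_integral_lamP:
  assumes u: "(s, g, t) \<in> gunits P" and k: "k \<in> borel_measurable (borel_of (gtop P))"
  shows "(\<integral>\<^sup>+ z. k z \<partial>lamP (s, g, t)) = (\<integral>\<^sup>+ \<sigma>. \<integral>\<^sup>+ \<tau>. k (\<sigma>, g, \<tau>) \<partial>lamT t \<partial>lamS s)"
proof -
  have s: "s \<in> gunits S" and g: "g \<in> garr G" and t: "t \<in> gunits T"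
    using u by (simp_all add: gunits_P_iff)
  note lamZ = nn_integral_lamP_lamZ[OF s g t k]
  have "(\<integral>\<^sup>+ z. k z \<partial>lamP (s, g, t)) = (\<integral>\<^sup>+ \<sigma>. \<integral>\<^sup>+ \<tau>. k (\<sigma>, g, \<tau>) * indicator W (\<sigma>, g, \<tau>) \<partial>lamT t \<partial>lamS s)"
    unfolding lamZ(1) using lamZ(2) g unfolding lamZ_def
    by (intro nn_integral_pair_return_pair[OF T.sigma_finite_lam[OF t]]) simp_all
  also have "\<dots> = (\<integral>\<^sup>+ \<sigma>. \<integral>\<^sup>+ \<tau>. k (\<sigma>, g, \<tau>) \<partial>lamT t \<partial>lamS s)"
    using rfib_P_mem_W(2)[OF u] by (intro nn_integral_fibres_cong[OF s t]) simp
  finally show ?thesis .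
qed

lemma emeasure_lamP_fibres:
  assumes u: "(s, g, t) \<in> gunits P" and E: "E \<in> sets (borel_of (gtop P))"
  shows "emeasure (lamP (s, g, t)) E = (\<integral>\<^sup>+ \<sigma>. \<integral>\<^sup>+ \<tau>. indicator E (\<sigma>, g, \<tau>) \<partial>lamT t \<partial>lamS s)"
  using nn_integral_lamP[OF u borel_measurable_indicator[OF E]] E by simp

lemma system_of_measures_P: "system_of_measures P lamP"
  unfolding system_of_measures_def
proof (intro ballI conjI)
  fix u assume u: "u \<in> gunits P"
  then obtain s g t where u_eq: "u = (s, g, t)" and s: "s \<in> gunits S" and t: "t \<in> gunits T"
    by (cases u) (auto simp: gunits_P_iff)
  show "sets (lamP u) = sets (borel_of (gtop P))" "space (lamP u) = garr P"
    by simp_all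
  have E: "garr P - rfib P u \<in> sets (borel_of (gtop P))"
    using sets.compl_sets[OF borel_of_closed[OF closedin_rfib_P[OF u]]] by simp
  have "emeasure (lamP u) (garr P - rfib P u) =
      (\<integral>\<^sup>+ \<sigma>. \<integral>\<^sup>+ \<tau>. indicator (garr P - rfib P u) (\<sigma>, g, \<tau>) \<partial>lamT t \<partial>lamS s)"
    using emeasure_lamP_fibres[OF u[unfolded u_eq] E[unfolded u_eq]] unfolding u_eq .
  also have "\<dots> = (\<integral>\<^sup>+ \<sigma>. \<integral>\<^sup>+ \<tau>. 0 \<partial>lamT t \<partial>lamS s)"
    using rfib_P_mem_W(1)[OF u[unfolded u_eq]] unfolding u_eq by (intro nn_integral_fibres_cong[OF s t]) simp
  finally show "emeasure (lamP u) (garr P - rfib P u) = 0"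
    by simp
qed

lemma positive_on_open_P: "positive_on_open P lamP"
  unfolding positive_on_open_def
proof (intro ballI allI impI)
  fix u A assume u: "u \<in> gunits P" and A: "openin (gtop P) A \<and> A \<inter> rfib P u \<noteq> {}"
  obtain s g t where u_eq: "u = (s, g, t)"
    by (cases u)
  have s: "s \<in> gunits S" and g: "g \<in> garr G" and t: "t \<in> gunits T"
    using u by (simp_all add: u_eq gunits_P_iff)
  obtain z where z: "z \<in> A" "z \<in> rfib P u"
    using A by blast
  obtain \<sigma>0 h0 \<tau>0 where z_eq: "z = (\<sigma>0, h0, \<tau>0)"
    by (cases z)
  have z0: "(\<sigma>0, g, \<tau>0) \<in> A" "\<sigma>0 \<in> rfib S s" "\<tau>0 \<in> rfib T t"
    using z rfib_P_iff[OF u[unfolded u_eq], of \<sigma>0 h0 \<tau>0] unfolding z_eq u_eq by simp_all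
  obtain N where N: "openin Z N" "A = N \<inter> W"
    using A unfolding gtop_P openin_subtopology by blast
  obtain U V1 V2 where UV: "openin (gtop S) U" "openin (gtop G) V1" "openin (gtop T) V2"
    "\<sigma>0 \<in> U" "g \<in> V1" "\<tau>0 \<in> V2" "U \<times> V1 \<times> V2 \<subseteq> N"
    using openin_prod_topology_box3[OF N(1)] z0(1) N(2) by blast
  have "U \<inter> rfib S s \<noteq> {}" "V2 \<inter> rfib T t \<noteq> {}"
    using z0(2,3) UV(4,6) by blast+
  then have "0 < emeasure (lamS s) U * emeasure (lamT t) V2"
    using S.emeasure_lam_pos[OF s UV(1)] T.emeasure_lam_pos[OF t UV(3)]
    by (simp add: ennreal_zero_less_mult_iff)
  also have "\<dots> = (\<integral>\<^sup>+ \<sigma>. \<integral>\<^sup>+ \<tau>. indicator U \<sigma> * indicator V2 \<tau> \<partial>lamT t \<partial>lamS s)"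
    using borel_of_open[OF UV(1)] borel_of_open[OF UV(3)] S.sets_lam[OF s] T.sets_lam[OF t]
    by (simp add: nn_integral_cmult nn_integral_multc)
  also have "\<dots> \<le> (\<integral>\<^sup>+ \<sigma>. \<integral>\<^sup>+ \<tau>. indicator A (\<sigma>, g, \<tau>) \<partial>lamT t \<partial>lamS s)"
  proof (rule nn_integral_fibres_mono[OF s t])
    fix \<sigma> \<tau> assume "\<sigma> \<in> rfib S s" "\<tau> \<in> rfib T t"
    then have "(\<sigma>, g, \<tau>) \<in> W"
      using rfib_P_mem_W(2)[OF u[unfolded u_eq]] by blast
    then show "indicator U \<sigma> * indicator V2 \<tau> \<le> (indicator A (\<sigma>, g, \<tau>) :: ennreal)"
      using UV(5,7) N(2) by (auto simp: indicator_def)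
  qed
  also have "\<dots> = emeasure (lamP u) A"
    using emeasure_lamP_fibres[OF u[unfolded u_eq] borel_of_open] A unfolding u_eq by simp
  finally show "0 < emeasure (lamP u) A" .
qed

lemma continuous_map_units_P:
  "continuous_map (subtopology (gtop P) (gunits P))
    (prod_topology (subtopology (gtop S) (gunits S)) (prod_topology (gtop G) (subtopology (gtop T) (gunits T)))) id"
proof -
  have "prod_topology (subtopology (gtop S) (gunits S)) (prod_topology (gtop G) (subtopology (gtop T) (gunits T))) =
      subtopology Z (gunits S \<times> (garr G \<times> gunits T))"
    using subtopology_Times[of "gtop G" "gtop T" "garr G" "gunits T"]
      subtopology_Times[of "gtop S" "prod_topology (gtop G) (gtop T)" "gunits S" "garr G \<times> gunits T"]
    by simp
  moreover have "id ` topspace (subtopology (gtop P) (gunits P)) \<subseteq> gunits S \<times> (garr G \<times> gunits T)"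
    using gunits_P_subset by (auto simp: gtop_P gunits_P_iff)
  moreover have "continuous_map (subtopology (gtop P) (gunits P)) Z id"
    unfolding gtop_P subtopology_subtopology by (rule continuous_map_id_subt)
  ultimately show ?thesis
    by (auto simp: continuous_map_in_subtopology)
qed

lemma continuous_system_P: "continuous_system P lamP"
  unfolding continuous_system_def
proof (intro allI impI conjI)
  fix f assume f: "cc_nonneg (gtop P) f"
  obtain h where h: "cc_nonneg Z h" "\<And>z. z \<in> W \<Longrightarrow> h z = f z"
    using cc_nonneg_extend[OF locally_compact_Z Hausdorff_Z closedin_W f[unfolded gtop_P]] by blast
  let ?I = "\<lambda>(s, g, t). (\<integral>\<^sup>+ \<sigma>. \<integral>\<^sup>+ \<tau>. ennreal (h (\<sigma>, g, \<tau>)) \<partial>lamT t \<partial>lamS s)"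
  have eq: "(\<integral>\<^sup>+ z. ennreal (f z) \<partial>lamP u) = ?I u" if u: "u \<in> gunits P" for u
  proof -
    obtain s g t where u_eq: "u = (s, g, t)"
      by (cases u)
    have "f \<in> borel_measurable (borel_of (gtop P))"
      using f unfolding cc_nonneg_def by (blast intro: borel_measurable_continuous_map)
    then have "(\<lambda>z. ennreal (f z)) \<in> borel_measurable (borel_of (gtop P))"
      by (rule measurable_compose[OF _ measurable_ennreal])
    then have "(\<integral>\<^sup>+ z. ennreal (f z) \<partial>lamP u) = (\<integral>\<^sup>+ \<sigma>. \<integral>\<^sup>+ \<tau>. ennreal (f (\<sigma>, g, \<tau>)) \<partial>lamT t \<partial>lamS s)"
      using u unfolding u_eq by (intro nn_integral_lamP) auto
    also have "\<dots> = ?I u"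
      using u rfib_P_mem_W(2)[OF u[unfolded u_eq]] h(2) unfolding u_eq prod.case
      by (intro nn_integral_fibres_cong) (auto simp: gunits_P_iff)
    finally show ?thesis .
  qed
  note iterated = continuous_map_nn_integral_iterated[OF S.cc_continuous_family_axioms
      T.cc_continuous_family_axioms h(1)]
  show "\<forall>u\<in>gunits P. (\<integral>\<^sup>+ x. ennreal (f x) \<partial>lamP u) < \<infinity>"
    using iterated(2) eq by (auto simp: gunits_P_iff)
  show "continuous_map (subtopology (gtop P) (gunits P)) euclideanreal (\<lambda>u. enn2real (\<integral>\<^sup>+ x. ennreal (f x) \<partial>lamP u))"
    using gunits_P_subset
    by (intro continuous_map_eq[OF continuous_map_compose[OF continuous_map_units_P iterated(1)]])
      (auto simp: case_prod_unfold gtop_P eq)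
qed

lemma ltrans_P_subset_rfib:
  assumes x: "x \<in> W"
  shows "ltrans P x (E \<inter> rfib P (gd P x)) \<subseteq> rfib P (gr P x)"
proof
  fix z assume "z \<in> ltrans P x (E \<inter> rfib P (gd P x))"
  then obtain y where y: "y \<in> rfib P (gd P x)" "z = gmul P x y"
    unfolding ltrans_def by blast
  obtain s g t where x_eq: "x = (s, g, t)"
    by (cases x)
  obtain \<sigma> h \<tau> where y_eq: "y = (\<sigma>, h, \<tau>)"
    by (cases y)
  have s: "s \<in> garr S" and t: "t \<in> garr T"
    using x x_eq by simp_all
  have "\<sigma> \<in> rfib S (gd S s)" "\<tau> \<in> rfib T (gd T t)"
    using y(1) rfib_P_iff[OF d_P_unit[OF x[unfolded x_eq]]] unfolding x_eq y_eq by simp_all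
  then have "gmul S s \<sigma> \<in> rfib S (gr S s)" "gmul T t \<tau> \<in> rfib T (gr T t)"
    using s t by (auto simp: rfib_def S.mul_arr T.mul_arr)
  then show "z \<in> rfib P (gr P x)"
    using rfib_P_mem_W(1)[OF r_P_unit[OF x[unfolded x_eq]]] y(2) unfolding x_eq y_eq by simp
qed

lemma mem_ltrans_P_iff:
  assumes x: "(s, g, t) \<in> W" and \<sigma>: "\<sigma> \<in> rfib S (gr S s)" and \<tau>: "\<tau> \<in> rfib T (gr T t)"
  shows "(\<sigma>, g, \<tau>) \<in> ltrans P (s, g, t) (E \<inter> rfib P (gd P (s, g, t))) \<longleftrightarrow>
    (S.inv_translate s \<sigma>, gmul G (gmul G (ginv G (p s)) g) (q t), T.inv_translate t \<tau>) \<in> E"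
    (is "_ \<longleftrightarrow> (?\<sigma>', ?h, ?\<tau>') \<in> E")
proof -
  have s: "s \<in> garr S" and t: "t \<in> garr T"
    using x by simp_all
  have \<sigma>': "?\<sigma>' = gmul S (ginv S s) \<sigma>" "gmul S s ?\<sigma>' = \<sigma>"
    using \<sigma> S.mul_inv_cancel_left[OF s] by (auto simp: S.inv_translate_def rfib_def)
  have \<tau>': "?\<tau>' = gmul T (ginv T t) \<tau>" "gmul T t ?\<tau>' = \<tau>"
    using \<tau> T.mul_inv_cancel_left[OF t] by (auto simp: T.inv_translate_def rfib_def)
  note rfib_d = rfib_P_iff[OF d_P_unit[OF x]]
  show ?thesis
  proof
    assume "(\<sigma>, g, \<tau>) \<in> ltrans P (s, g, t) (E \<inter> rfib P (gd P (s, g, t)))"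
    then obtain y where y: "y \<in> E" "y \<in> rfib P (gd P (s, g, t))" "(\<sigma>, g, \<tau>) = gmul P (s, g, t) y"
      unfolding ltrans_def by blast
    obtain \<sigma>1 h \<tau>1 where y_eq: "y = (\<sigma>1, h, \<tau>1)"
      by (cases y)
    have "\<sigma>1 \<in> rfib S (gd S s)" "h = ?h" "\<tau>1 \<in> rfib T (gd T t)" "\<sigma> = gmul S s \<sigma>1" "\<tau> = gmul T t \<tau>1"
      using y(2,3) rfib_d unfolding y_eq by simp_all
    then have "?\<sigma>' = \<sigma>1" "?\<tau>' = \<tau>1"
      using \<sigma>'(1) \<tau>'(1) S.inv_mul_cancel_left[OF s] T.inv_mul_cancel_left[OF t] by (auto simp: rfib_def)
    then show "(?\<sigma>', ?h, ?\<tau>') \<in> E"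
      using y(1) \<open>h = ?h\<close> unfolding y_eq by simp
  next
    assume "(?\<sigma>', ?h, ?\<tau>') \<in> E"
    moreover have "(?\<sigma>', ?h, ?\<tau>') \<in> rfib P (gd P (s, g, t))"
      using rfib_d S.inv_translate_rfib[OF s \<sigma>] T.inv_translate_rfib[OF t \<tau>] by simp
    moreover have "(\<sigma>, g, \<tau>) = gmul P (s, g, t) (?\<sigma>', ?h, ?\<tau>')"
      using \<sigma>'(2) \<tau>'(2) by simp
    ultimately show "(\<sigma>, g, \<tau>) \<in> ltrans P (s, g, t) (E \<inter> rfib P (gd P (s, g, t)))"
      unfolding ltrans_def by blast
  qed
qed

lemma ltrans_P_eq:
  assumes x: "(s, g, t) \<in> W"
  shows "ltrans P (s, g, t) (E \<inter> rfib P (gd P (s, g, t))) = {y \<in> rfib P (gr P (s, g, t)).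
      (S.inv_translate s (fst y), gmul G (gmul G (ginv G (p s)) g) (q t), T.inv_translate t (snd (snd y))) \<in> E}"
proof -
  have "y \<in> ltrans P (s, g, t) (E \<inter> rfib P (gd P (s, g, t))) \<longleftrightarrow>
      (S.inv_translate s (fst y), gmul G (gmul G (ginv G (p s)) g) (q t), T.inv_translate t (snd (snd y))) \<in> E"
    if "y \<in> rfib P (gr P (s, g, t))" for y
    using that mem_ltrans_P_iff[OF x] rfib_P_iff[OF r_P_unit[OF x]]
    by (cases y) auto
  then show ?thesis
    using ltrans_P_subset_rfib[OF x] by blast
qed

lemma continuous_map_inv_translate_P:
  assumes x: "(s, g, t) \<in> W"
  shows "continuous_map (subtopology (gtop P) (rfib P (gr P (s, g, t)))) (gtop P)
    (\<lambda>y. (S.inv_translate s (fst y), gmul G (gmul G (ginv G (p s)) g) (q t), T.inv_translate t (snd (snd y))))"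
    (is "continuous_map ?D _ ?\<Psi>")
proof -
  have s: "s \<in> garr S" and t: "t \<in> garr T"
    using x by simp_all
  note fibre = rfib_P_iff[OF r_P_unit[OF x]]
  have D_Z: "continuous_map ?D Z id"
    unfolding gtop_P subtopology_subtopology by (rule continuous_map_id_subt)
  have "continuous_map ?D (subtopology (gtop S) (rfib S (gr S s))) fst"
    using continuous_map_compose[OF D_Z continuous_map_fst] fibre
    by (auto simp: continuous_map_in_subtopology o_def rfib_def)
  from continuous_map_compose[OF this S.continuous_map_inv_translate[OF s]]
  have "continuous_map ?D (gtop S) (\<lambda>y. S.inv_translate s (fst y))"
    by (simp add: o_def)
  moreover have "continuous_map ?D (subtopology (gtop T) (rfib T (gr T t))) (\<lambda>y. snd (snd y))"
    using continuous_map_compose[OF D_Z continuous_map_compose[OF continuous_map_snd continuous_map_snd]] fibre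
    by (auto simp: continuous_map_in_subtopology o_def rfib_def)
  from continuous_map_compose[OF this T.continuous_map_inv_translate[OF t]]
  have "continuous_map ?D (gtop T) (\<lambda>y. T.inv_translate t (snd (snd y)))"
    by (simp add: o_def)
  moreover have "gmul G (gmul G (ginv G (p s)) g) (q t) \<in> garr G"
    using d_P_unit[OF x] by (simp add: gunits_P_iff)
  ultimately have "continuous_map ?D Z ?\<Psi>"
    by (simp add: continuous_map_paired)
  moreover have "?\<Psi> y \<in> W" if "y \<in> topspace ?D" for y
  proof -
    obtain \<sigma> h \<tau> where y: "y = (\<sigma>, h, \<tau>)"
      by (cases y)
    then have "\<sigma> \<in> rfib S (gr S s)" "\<tau> \<in> rfib T (gr T t)"
      using that fibre[of \<sigma> h \<tau>] by simp_all
    then show ?thesis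
      using rfib_P_mem_W(2)[OF d_P_unit[OF x] S.inv_translate_rfib[OF s] T.inv_translate_rfib[OF t]] y
      by simp
  qed
  ultimately show ?thesis
    unfolding gtop_P by (auto simp: continuous_map_in_subtopology)
qed

lemma ltrans_P_sets:
  assumes x: "x \<in> W" and E: "E \<in> sets (borel_of (gtop P))"
  shows "ltrans P x (E \<inter> rfib P (gd P x)) \<in> sets (borel_of (gtop P))"
proof -
  obtain s g t where x_eq: "x = (s, g, t)"
    by (cases x)
  let ?D = "subtopology (gtop P) (rfib P (gr P x))"
  let ?\<Psi> = "\<lambda>y. (S.inv_translate s (fst y), gmul G (gmul G (ginv G (p s)) g) (q t), T.inv_translate t (snd (snd y)))"
  have "?\<Psi> -` E \<inter> space (borel_of ?D) \<in> sets (borel_of ?D)"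
    using continuous_map_inv_translate_P[OF x[unfolded x_eq]] E unfolding x_eq
    by (intro measurable_sets[OF continuous_map_measurable_borel_of])
  moreover have "?\<Psi> -` E \<inter> space (borel_of ?D) = ltrans P x (E \<inter> rfib P (gd P x))"
    using ltrans_P_eq[OF x[unfolded x_eq]]
    unfolding x_eq by (auto simp: rfib_def[of P])
  moreover have "sets (borel_of ?D) \<subseteq> sets (borel_of (gtop P))"
    using borel_of_closed[OF closedin_rfib_P[OF r_P_unit[OF x[unfolded x_eq]]]] unfolding x_eq
    by (simp add: sets_borel_of_subtopology_subset)
  ultimately show ?thesis
    by auto
qed

lemma left_invariant_P: "left_invariant P lamP"
  unfolding left_invariant_def
proof (intro ballI)
  fix x E assume x: "x \<in> garr P" and E: "E \<in> sets (borel_of (gtop P))"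
  obtain s g t where x_eq: "x = (s, g, t)"
    by (cases x)
  define h where "h = gmul G (gmul G (ginv G (p s)) g) (q t)"
  have xW: "(s, g, t) \<in> W" and s: "s \<in> garr S" and t: "t \<in> garr T"
    using x x_eq by simp_all
  have r_unit: "(gr S s, g, gr T t) \<in> gunits P" and d_unit: "(gd S s, h, gd T t) \<in> gunits P"
    using r_P_unit[OF xW] d_P_unit[OF xW] by (simp_all add: h_def)
  have dS: "gd S s \<in> gunits S" and hG: "h \<in> garr G" and dT: "gd T t \<in> gunits T"
    using d_unit by (simp_all add: gunits_P_iff)
  have "E \<in> sets (lamZ (gd S s) h (gd T t))"
    using sets_borel_P_lamZ[OF dS hG dT] E by blast
  note slices = measurable_pair_return_pair_slices[OF T.sigma_finite_lam[OF dT] _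
      borel_measurable_indicator[OF this[unfolded lamZ_def]]]
  have slice_T: "(\<lambda>\<tau>. indicator E (\<sigma>, h, \<tau>) :: ennreal) \<in> borel_measurable (borel_of (gtop T))" if "\<sigma> \<in> garr S" for \<sigma>
    using slices(1)[of \<sigma>] that hG S.space_lam[OF dS] unfolding T.measurable_lam_eq[OF dT] by simp
  have slice_S: "(\<lambda>\<sigma>. \<integral>\<^sup>+ \<tau>. indicator E (\<sigma>, h, \<tau>) \<partial>lamT (gd T t)) \<in> borel_measurable (borel_of (gtop S))"
    using slices(2) hG unfolding S.measurable_lam_eq[OF dS] by simp
  have "emeasure (lamP (gr P x)) (ltrans P x (E \<inter> rfib P (gd P x))) =
      (\<integral>\<^sup>+ \<sigma>. \<integral>\<^sup>+ \<tau>. indicator (ltrans P x (E \<inter> rfib P (gd P x))) (\<sigma>, g, \<tau>) \<partial>lamT (gr T t) \<partial>lamS (gr S s))"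
    using emeasure_lamP_fibres[OF r_unit ltrans_P_sets[OF xW[folded x_eq] E]] unfolding x_eq by simp
  also have "\<dots> = (\<integral>\<^sup>+ \<sigma>. \<integral>\<^sup>+ \<tau>. indicator E (S.inv_translate s \<sigma>, h, T.inv_translate t \<tau>) \<partial>lamT (gr T t) \<partial>lamS (gr S s))"
    using mem_ltrans_P_iff[OF xW] unfolding x_eq h_def
    by (intro nn_integral_fibres_cong) (auto simp: S.r_unit_mem T.r_unit_mem s t indicator_def)
  also have "\<dots> = (\<integral>\<^sup>+ \<sigma>. \<integral>\<^sup>+ \<tau>. indicator E (S.inv_translate s \<sigma>, h, \<tau>) \<partial>lamT (gd T t) \<partial>lamS (gr S s))"
    using T.nn_integral_inv_translate[OF t slice_T] S.inv_translate_arr[OF s] by simp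
  also have "\<dots> = (\<integral>\<^sup>+ \<sigma>. \<integral>\<^sup>+ \<tau>. indicator E (\<sigma>, h, \<tau>) \<partial>lamT (gd T t) \<partial>lamS (gd S s))"
    using S.nn_integral_inv_translate[OF s slice_S] by simp
  also have "\<dots> = emeasure (lamP (gd P x)) E"
    using emeasure_lamP_fibres[OF d_unit E] unfolding x_eq h_def by simp
  finally show "emeasure (lamP (gd P x)) E = emeasure (lamP (gr P x)) (ltrans P x (E \<inter> rfib P (gd P x)))"
    by simp
qed

end

theorem theorem4p2:
  fixes S :: "('s, 'x) tgroupoid_scheme" and G :: "('g, 'y) tgroupoid_scheme"
    and T :: "('t, 'z) tgroupoid_scheme"
    and lamS :: "'s \<Rightarrow> 's measure" and lamG :: "'g \<Rightarrow> 'g measure" and lamT :: "'t \<Rightarrow> 't measure"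
    and muS :: "'s measure" and muG :: "'g measure" and muT :: "'t measure"
    and p :: "'s \<Rightarrow> 'g" and q :: "'t \<Rightarrow> 'g"
  assumes "haar_groupoid S lamS muS"
    and "haar_groupoid G lamG muG"
    and "haar_groupoid T lamT muT"
    and "haar_hom S lamS muS G lamG muG p"
    and "haar_hom T lamT muT G lamG muG q"
  shows "cont_left_haar_system (weak_pullback S G T p q) (pullback_system S G T p q lamS lamT)"
proof -
  have lcsc: "lcsc_groupoid S" "lcsc_groupoid G" "lcsc_groupoid T"
    and Haar: "cont_left_haar_system S lamS" "cont_left_haar_system T lamT"
    using assms(1-3) unfolding haar_groupoid_def by blast+
  then have "groupoid S" "groupoid G" "groupoid T"
    unfolding lcsc_groupoid_def topological_groupoid_def by blast+
  then interpret Weak_pullback S lamS T lamT G p q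
    using lcsc Haar assms(4,5) unfolding haar_hom_def by unfold_locales blast+
  show ?thesis
    unfolding cont_left_haar_system_def
    using system_of_measures_P continuous_system_P left_invariant_P positive_on_open_P by blast
qed

end
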